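(* Consider the two-layer process described in the context (donation game with the "fixed benefits, fixed costs" payoff in layer 1, constant selection in layer 2, death-Birth updating in both layers), and let $\boldsymbol{\xi}$ be any initial state that is not one of the four states in which both layers are monomorphic. Let $\rho^{[1]}(\boldsymbol{\xi})$ be the probability that layer 1 eventually consists only of cooperators. Then $\left.\frac{\mathrm{d}}{\mathrm{d}\delta}\rho^{[1]}(\boldsymbol{\xi})\right|_{\delta=0}>0$ if and only if $$b\Big\{\sum_{i,\ell}\pi^{[1]}_i\,p^{[1]}_{\ell i}\,\beta_{i\ell}-\sum_{i,j,\ell}\pi^{[1]}_i\big((P^{[1]})^2\big)_{ij}\,p^{[1]}_{\ell j}\,\beta_{i\ell}\Big\}+c\,\theta_2-(r-1)\,\phi_{2,0}>0 .$$
   Context: There are $N\ge2$ individuals. For each layer $L\in\{1,2\}$ there is a connected undirected weighted graph on $\{1,\dots,N\}$ with symmetric nonnegative weights $w^{[L]}_{ij}$; $s^{[L]}_i=\sum_j w^{[L]}_{ij}>0$, $p^{[L]}_{ij}=w^{[L]}_{ij}/s^{[L]}_i$, $P^{[L]}=(p^{[L]}_{ij})$, $\pi^{[L]}_i=s^{[L]}_i/\sum_k s^{[L]}_k$. States $(x^{[1]},x^{[2]})\in\{0,1\}^N\times\{0,1\}^N$: $x^{[1]}_i=1$ means cooperator in layer 1, $x^{[2]}_i=1$ means mutant in layer 2. Payoff: $u_i=-c\,x^{[1]}_i+\sum_j b\,\frac{w^{[1]}_{ij}}{s^{[1]}_j}x^{[1]}_j+(r-1)x^{[2]}_i+1$ with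 $r\ge0$; fecundity $F_i=1+\delta u_i$, $\delta\ge0$. Each time step, simultaneously and independently in each layer $L$: choose $i$ uniformly, choose $j$ with probability $w^{[L]}_{ij}F_j/\sum_k w^{[L]}_{ik}F_k$, set $x^{[L]}_i\leftarrow x^{[L]}_j$. Let $\hat\xi^{[L]}=\sum_i\pi^{[L]}_i\xi^{[L]}_i$. $(\beta_{ij})$ is the unique solution of $\beta_{ii}=N(\xi^{[1]}_i-\hat\xi^{[1]})+\sum_k p^{[1]}_{ik}\beta_{kk}$; $\beta_{ij}=\tfrac N2(\xi^{[1]}_i\xi^{[1]}_j-\hat\xi^{[1]})+\tfrac12\sum_k p^{[1]}_{ik}\beta_{kj}+\tfrac12\sum_k p^{[1]}_{jk}\beta_{ik}$ ($i\ne j$); $\sum_i\pi^{[1]}_i\beta_{ii}=0$. $(\gamma_{ij})$ is the unique solution of $\gamma_{ij}=\frac{N^2}{2N-1}(\xi^{[1]}_i\xi^{[2]}_j-\hat\xi^{[1]}\hat\xi^{[2]})+\frac{1}{2N-1}\sum_{k_1,k_2}p^{[1]}_{ik_1}p^{[2]}_{jk_2}\gamma_{k_1k_2}+\frac{N-1}{2N-1}\big(\sum_k p^{[1]}_{ik}\gamma_{kj}+\sum_k p^{[2]}_{jk}\gamma_{ik}\big)$ for all $i,j$, with $\sum_i\pi^{[1]}_i\gamma_{ii}=0$. Define $\theta_n=\sum_{i,j}\pi^{[1]}_i((P^{[1]})^n)_{ij}\beta_{ij}$ and $\phi_{n,m}=\sum_{i,j}\pi^{[1]}_i((P^{[1]})^n(P^{[2]})^m)_{ij}\gamma_{ij}$.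 *)

theory Defs
  imports "HOL-Analysis.Analysis"
begin

text \<open>Individuals are indexed by 0..<N. A weighted graph is w :: nat => nat => real.
  A state of one layer is the set of indices i with x_i = 1.\<close>

definition ind :: "bool \<Rightarrow> real" where
  "ind P = (if P then 1 else 0)"

definition strength :: "nat \<Rightarrow> (nat \<Rightarrow> nat \<Rightarrow> real) \<Rightarrow> nat \<Rightarrow> real" where
  "strength N w i = (\<Sum>j<N. w i j)"

definition trans_prob :: "nat \<Rightarrow> (nat \<Rightarrow> nat \<Rightarrow> real) \<Rightarrow> nat \<Rightarrow> nat \<Rightarrow> real" where
  "trans_prob N w i j = w i j / strength N w i"

definition stat_dist :: "nat \<Rightarrow> (nat \<Rightarrow> nat \<Rightarrow> real) \<Rightarrow> nat \<Rightarrow> real" where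
  "stat_dist N w i = strength N w i / (\<Sum>k<N. strength N w k)"

fun mat_pow :: "nat \<Rightarrow> (nat \<Rightarrow> nat \<Rightarrow> real) \<Rightarrow> nat \<Rightarrow> nat \<Rightarrow> nat \<Rightarrow> real" where
  "mat_pow N P 0 i j = (if i = j then 1 else 0)"
| "mat_pow N P (Suc n) i j = (\<Sum>k<N. mat_pow N P n i k * P k j)"

definition connected_graph :: "nat \<Rightarrow> (nat \<Rightarrow> nat \<Rightarrow> real) \<Rightarrow> bool" where
  "connected_graph N w \<longleftrightarrow>
     (\<forall>i<N. \<forall>j<N. (i, j) \<in> ({(a, b). a < N \<and> b < N \<and> w a b > 0})\<^sup>*)"

definition weighted_graph :: "nat \<Rightarrow> (nat \<Rightarrow> nat \<Rightarrow> real) \<Rightarrow> bool" where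
  "weighted_graph N w \<longleftrightarrow>
     (\<forall>i<N. \<forall>j<N. w i j = w j i \<and> 0 \<le> w i j) \<and>
     (\<forall>i<N. strength N w i > 0) \<and> connected_graph N w"

definition avg_state :: "nat \<Rightarrow> (nat \<Rightarrow> nat \<Rightarrow> real) \<Rightarrow> nat set \<Rightarrow> real" where
  "avg_state N w X = (\<Sum>i<N. stat_dist N w i * ind (i \<in> X))"

definition payoff :: "nat \<Rightarrow> (nat \<Rightarrow> nat \<Rightarrow> real) \<Rightarrow> real \<Rightarrow> real \<Rightarrow> real
    \<Rightarrow> nat set \<Rightarrow> nat set \<Rightarrow> nat \<Rightarrow> real" where
  "payoff N w1 b c r X1 X2 i =
     - c * ind (i \<in> X1) + (\<Sum>j<N. b * (w1 i j / strength N w1 j) * ind (j \<in> X1))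
     + (r - 1) * ind (i \<in> X2) + 1"

definition fecundity :: "nat \<Rightarrow> (nat \<Rightarrow> nat \<Rightarrow> real) \<Rightarrow> real \<Rightarrow> real \<Rightarrow> real \<Rightarrow> real
    \<Rightarrow> nat set \<Rightarrow> nat set \<Rightarrow> nat \<Rightarrow> real" where
  "fecundity N w1 b c r \<delta> X1 X2 i = 1 + \<delta> * payoff N w1 b c r X1 X2 i"

definition copy_type :: "nat set \<Rightarrow> nat \<Rightarrow> nat \<Rightarrow> nat set" where
  "copy_type X i j = (if j \<in> X then insert i X else X - {i})"

definition layer_step :: "nat \<Rightarrow> (nat \<Rightarrow> nat \<Rightarrow> real) \<Rightarrow> (nat \<Rightarrow> real)
    \<Rightarrow> nat set \<Rightarrow> nat set \<Rightarrow> real" where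
  "layer_step N w F X Y =
     (\<Sum>i<N. (1 / real N) *
        (\<Sum>j<N. if copy_type X i j = Y
                 then w i j * F j / (\<Sum>k<N. w i k * F k) else 0))"

definition states :: "nat \<Rightarrow> (nat set \<times> nat set) set" where
  "states N = Pow {0..<N} \<times> Pow {0..<N}"

definition kernel :: "nat \<Rightarrow> (nat \<Rightarrow> nat \<Rightarrow> real) \<Rightarrow> (nat \<Rightarrow> nat \<Rightarrow> real)
    \<Rightarrow> real \<Rightarrow> real \<Rightarrow> real \<Rightarrow> real \<Rightarrow> nat set \<times> nat set \<Rightarrow> nat set \<times> nat set \<Rightarrow> real" where
  "kernel N w1 w2 b c r \<delta> s t =
     (let F = fecundity N w1 b c r \<delta> (fst s) (snd s)
      in layer_step N w1 F (fst s) (fst t) * layer_step N w2 F (snd s) (snd t))"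

fun kernel_pow :: "nat \<Rightarrow> (nat \<Rightarrow> nat \<Rightarrow> real) \<Rightarrow> (nat \<Rightarrow> nat \<Rightarrow> real)
    \<Rightarrow> real \<Rightarrow> real \<Rightarrow> real \<Rightarrow> real \<Rightarrow> nat \<Rightarrow> nat set \<times> nat set \<Rightarrow> nat set \<times> nat set \<Rightarrow> real" where
  "kernel_pow N w1 w2 b c r \<delta> 0 s t = (if s = t then 1 else 0)"
| "kernel_pow N w1 w2 b c r \<delta> (Suc n) s t =
     (\<Sum>u\<in>states N. kernel_pow N w1 w2 b c r \<delta> n s u * kernel N w1 w2 b c r \<delta> u t)"

text \<open>Probability that layer 1 eventually consists only of cooperators, started at s.
  Since the all-cooperator configuration of layer 1 is absorbing, this is the limit of the
  probability of being in that configuration at time n.\<close>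
definition fix_prob1 :: "nat \<Rightarrow> (nat \<Rightarrow> nat \<Rightarrow> real) \<Rightarrow> (nat \<Rightarrow> nat \<Rightarrow> real)
    \<Rightarrow> real \<Rightarrow> real \<Rightarrow> real \<Rightarrow> real \<Rightarrow> nat set \<times> nat set \<Rightarrow> real" where
  "fix_prob1 N w1 w2 b c r \<delta> s =
     lim (\<lambda>n. \<Sum>t\<in>{t \<in> states N. fst t = {0..<N}}. kernel_pow N w1 w2 b c r \<delta> n s t)"

definition beta_system :: "nat \<Rightarrow> (nat \<Rightarrow> nat \<Rightarrow> real) \<Rightarrow> nat set \<Rightarrow> (nat \<Rightarrow> nat \<Rightarrow> real) \<Rightarrow> bool" where
  "beta_system N w1 X1 \<beta> \<longleftrightarrow>
     (\<forall>i<N. \<beta> i i = real N * (ind (i \<in> X1) - avg_state N w1 X1)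
                     + (\<Sum>k<N. trans_prob N w1 i k * \<beta> k k)) \<and>
     (\<forall>i<N. \<forall>j<N. i \<noteq> j \<longrightarrow>
        \<beta> i j = real N / 2 * (ind (i \<in> X1) * ind (j \<in> X1) - avg_state N w1 X1)
                 + 1/2 * (\<Sum>k<N. trans_prob N w1 i k * \<beta> k j)
                 + 1/2 * (\<Sum>k<N. trans_prob N w1 j k * \<beta> i k)) \<and>
     (\<Sum>i<N. stat_dist N w1 i * \<beta> i i) = 0"

definition gamma_system :: "nat \<Rightarrow> (nat \<Rightarrow> nat \<Rightarrow> real) \<Rightarrow> (nat \<Rightarrow> nat \<Rightarrow> real)
    \<Rightarrow> nat set \<Rightarrow> nat set \<Rightarrow> (nat \<Rightarrow> nat \<Rightarrow> real) \<Rightarrow> bool" where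
  "gamma_system N w1 w2 X1 X2 \<gamma> \<longleftrightarrow>
     (\<forall>i<N. \<forall>j<N.
        \<gamma> i j = (real N)^2 / (2 * real N - 1) *
                   (ind (i \<in> X1) * ind (j \<in> X2) - avg_state N w1 X1 * avg_state N w2 X2)
               + 1 / (2 * real N - 1) *
                   (\<Sum>k1<N. \<Sum>k2<N. trans_prob N w1 i k1 * trans_prob N w2 j k2 * \<gamma> k1 k2)
               + (real N - 1) / (2 * real N - 1) *
                   ((\<Sum>k<N. trans_prob N w1 i k * \<gamma> k j) + (\<Sum>k<N. trans_prob N w2 j k * \<gamma> i k))) \<and>
     (\<Sum>i<N. stat_dist N w1 i * \<gamma> i i) = 0"

definition theta :: "nat \<Rightarrow> (nat \<Rightarrow> nat \<Rightarrow> real) \<Rightarrow> (nat \<Rightarrow> nat \<Rightarrow> real) \<Rightarrow> nat \<Rightarrow> real" where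
  "theta N w1 \<beta> n =
     (\<Sum>i<N. \<Sum>j<N. stat_dist N w1 i * mat_pow N (trans_prob N w1) n i j * \<beta> i j)"

definition phi :: "nat \<Rightarrow> (nat \<Rightarrow> nat \<Rightarrow> real) \<Rightarrow> (nat \<Rightarrow> nat \<Rightarrow> real) \<Rightarrow> (nat \<Rightarrow> nat \<Rightarrow> real)
    \<Rightarrow> nat \<Rightarrow> nat \<Rightarrow> real" where
  "phi N w1 w2 \<gamma> n m =
     (\<Sum>i<N. \<Sum>j<N. stat_dist N w1 i *
        (\<Sum>k<N. mat_pow N (trans_prob N w1) n i k * mat_pow N (trans_prob N w2) m k j) * \<gamma> i j)"

end

theory Submission
  imports Defs
begin

text \<open>For weak selection (fecundities in [1/2, 3/2]) the chain is a stochastic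
  kernel on the finite state space, and the stationary-weighted cooperator frequency \<open>coop_freq\<close>
  moves in one step by \<delta> times a drift rate that vanishes on layer-1 monomorphic states.
  Along every path the mass on layer-1 mixed states decays geometrically (some neighbour of the
  cooperator cluster is converted with probability bounded below), so the fixation probability
  equals \<open>coop_freq \<xi>\<close> plus \<delta> times a uniformly convergent series of expected drift rates;
  its derivative at \<delta> = 0 is the neutral series. At neutrality the drift rate is a linear
  combination of deviations of pair correlations within layer 1 and across the layers; summing
  their neutral recurrences over time yields solutions of the beta and gamma systems, which are
  unique by a maximum principle on the connected graphs.\<close>

section \<open>Random walks on connected weighted graphs\<close>

lemma ind_simps [simp]:
  "ind True = 1" "ind False = 0" "0 \<le> ind P" "ind P \<le> 1" "ind P * ind P = ind P"
  by (auto simp: ind_def)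

lemma sum_filter_eq_sum_ind:
  "finite A \<Longrightarrow> (\<Sum>t\<in>{t\<in>A. P t}. f t) = (\<Sum>t\<in>A. f t * ind (P t))"
  by (simp add: ind_def sum.inter_filter[symmetric] if_distrib[where f="\<lambda>x. _ * x"] cong: if_cong)

lemma mat_pow_1: "i < N \<Longrightarrow> mat_pow N P 1 i j = P i j"
  unfolding One_nat_def mat_pow.simps by (simp add: if_distrib[where f="\<lambda>x. x * _"] cong: if_cong)

lemma mat_pow_2: "i < N \<Longrightarrow> mat_pow N P 2 i j = (\<Sum>k<N. P i k * P k j)"
  unfolding numeral_2_eq_2 mat_pow.simps(2)[of N P "Suc 0"] using mat_pow_1 by simp

lemma convex_comb_le:
  fixes q v :: "nat \<Rightarrow> real"
  assumes "\<And>k. k < N \<Longrightarrow> 0 \<le> q k" and "(\<Sum>k<N. q k) = 1"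
    and "\<And>k. k < N \<Longrightarrow> v k \<le> M"
  shows "(\<Sum>k<N. q k * v k) \<le> M"
proof -
  have "(\<Sum>k<N. q k * v k) \<le> (\<Sum>k<N. q k * M)" by (intro sum_mono mult_left_mono) (auto simp: assms)
  also have "\<dots> = M" by (simp add: sum_distrib_right[symmetric] assms(2))
  finally show ?thesis .
qed

lemma convex_comb_eq_max:
  fixes q v :: "nat \<Rightarrow> real"
  assumes q_nonneg: "\<And>k. k < N \<Longrightarrow> 0 \<le> q k" and q_sum: "(\<Sum>k<N. q k) = 1"
    and v_le: "\<And>k. k < N \<Longrightarrow> v k \<le> M" and ge: "M \<le> (\<Sum>k<N. q k * v k)"
    and k0: "k0 < N" "0 < q k0"
  shows "v k0 = M"
proof -
  have gaps_nonneg: "\<forall>k\<in>{..<N}. 0 \<le> q k * (M - v k)" using q_nonneg v_le by auto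
  have "(\<Sum>k<N. q k * (M - v k)) = M - (\<Sum>k<N. q k * v k)"
    by (simp add: right_diff_distrib sum_subtractf sum_distrib_right[symmetric] q_sum)
  moreover have "0 \<le> (\<Sum>k<N. q k * (M - v k))"
    using gaps_nonneg by (intro sum_nonneg) blast
  ultimately have "(\<Sum>k<N. q k * (M - v k)) = 0"
    using ge by linarith
  then have "q k0 * (M - v k0) = 0"
    using sum_nonneg_eq_0_iff[OF finite_lessThan, of N "\<lambda>k. q k * (M - v k)"] gaps_nonneg k0(1)
    by simp
  then show ?thesis using k0(2) by simp
qed

lemma ex_max_on_square:
  fixes z :: "nat \<Rightarrow> nat \<Rightarrow> real"
  assumes "0 < N"
  obtains i0 j0 where "i0 < N" "j0 < N" "\<And>i j. i < N \<Longrightarrow> j < N \<Longrightarrow> z i j \<le> z i0 j0"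
proof -
  let ?S = "(\<lambda>(i, j). z i j) ` ({..<N} \<times> {..<N})"
  have "Max ?S \<in> ?S"
    using assms by (intro Max_in) auto
  then obtain i0 j0 where "i0 < N" "j0 < N" "z i0 j0 = Max ?S"
    by auto
  moreover have "z i j \<le> Max ?S" if "i < N" "j < N" for i j
    by (rule Max_ge) (use that in auto)
  ultimately show ?thesis using that by presburger
qed

lemma avg_state_empty: "avg_state N w {} = 0"
  by (simp add: avg_state_def)

lemma avg_state_copy_type:
  assumes "i < N"
  shows "avg_state N w (copy_type X i j) = avg_state N w X + stat_dist N w i * (ind (j \<in> X) - ind (i \<in> X))"
proof -
  have "avg_state N w (copy_type X i j) - avg_state N w X =
      (\<Sum>a<N. if a = i then stat_dist N w i * (ind (j \<in> X) - ind (i \<in> X)) else 0)"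
    unfolding avg_state_def sum_subtractf[symmetric] right_diff_distrib[symmetric]
    by (intro sum.cong refl) (auto simp: copy_type_def ind_def)
  then show ?thesis using assms by simp
qed

locale random_walk =
  fixes N :: nat and w :: "nat \<Rightarrow> nat \<Rightarrow> real"
  assumes graph: "weighted_graph N w" and N_pos: "0 < N"
begin

lemma weight_sym: "i < N \<Longrightarrow> j < N \<Longrightarrow> w i j = w j i"
  using graph by (auto simp: weighted_graph_def)

lemma weight_nonneg: "i < N \<Longrightarrow> j < N \<Longrightarrow> 0 \<le> w i j"
  using graph by (auto simp: weighted_graph_def)

lemma strength_pos: "i < N \<Longrightarrow> 0 < strength N w i"
  using graph by (auto simp: weighted_graph_def)

lemma trans_prob_nonneg: "i < N \<Longrightarrow> j < N \<Longrightarrow> 0 \<le> trans_prob N w i j"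
  using weight_nonneg[of i j] strength_pos[of i] by (simp add: trans_prob_def)

lemma trans_prob_pos: "i < N \<Longrightarrow> j < N \<Longrightarrow> 0 < w i j \<Longrightarrow> 0 < trans_prob N w i j"
  using strength_pos by (simp add: trans_prob_def)

lemma trans_prob_row_sum: "i < N \<Longrightarrow> (\<Sum>j<N. trans_prob N w i j) = 1"
  using strength_pos[of i] by (simp add: trans_prob_def sum_divide_distrib[symmetric] strength_def)

lemma trans_prob_sum_minus_const:
  "i < N \<Longrightarrow> (\<Sum>j<N. trans_prob N w i j * (g j - c)) = (\<Sum>j<N. trans_prob N w i j * g j) - c"
  using trans_prob_row_sum[of i]
  by (simp add: right_diff_distrib sum_subtractf sum_distrib_right[symmetric])

lemma total_strength_pos: "0 < (\<Sum>k<N. strength N w k)"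
  using N_pos by (intro sum_pos) (auto intro: strength_pos)

lemma stat_dist_nonneg: "i < N \<Longrightarrow> 0 \<le> stat_dist N w i"
  using strength_pos[of i] total_strength_pos by (simp add: stat_dist_def)

lemma stat_dist_sum: "(\<Sum>i<N. stat_dist N w i) = 1"
  using total_strength_pos by (simp add: stat_dist_def sum_divide_distrib[symmetric])

lemma stat_dist_reversible:
  "i < N \<Longrightarrow> j < N \<Longrightarrow> stat_dist N w i * trans_prob N w i j = stat_dist N w j * trans_prob N w j i"
  using strength_pos[of i] strength_pos[of j] weight_sym[of i j]
  by (simp add: stat_dist_def trans_prob_def)

lemma stat_dist_stationary:
  assumes "j < N"
  shows "(\<Sum>i<N. stat_dist N w i * trans_prob N w i j) = stat_dist N w j"
proof -
  have "(\<Sum>i<N. stat_dist N w i * trans_prob N w i j) = (\<Sum>i<N. stat_dist N w j * trans_prob N w j i)"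
    using stat_dist_reversible assms by (intro sum.cong) auto
  also have "\<dots> = stat_dist N w j"
    using trans_prob_row_sum assms by (simp add: sum_distrib_left[symmetric])
  finally show ?thesis .
qed

lemma stat_dist_sum_trans_prob:
  "(\<Sum>i<N. stat_dist N w i * (\<Sum>j<N. trans_prob N w i j * g j)) = (\<Sum>j<N. stat_dist N w j * g j)"
proof -
  have "(\<Sum>i<N. stat_dist N w i * (\<Sum>j<N. trans_prob N w i j * g j)) =
      (\<Sum>j<N. (\<Sum>i<N. stat_dist N w i * trans_prob N w i j) * g j)"
    by (simp add: sum_distrib_left sum_distrib_right mult.assoc) (rule sum.swap)
  then show ?thesis by (simp add: stat_dist_stationary)
qed

lemma avg_state_bounds: "0 \<le> avg_state N w X" "avg_state N w X \<le> 1"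
proof -
  show "0 \<le> avg_state N w X" unfolding avg_state_def
    by (intro sum_nonneg mult_nonneg_nonneg stat_dist_nonneg) auto
  have "avg_state N w X \<le> (\<Sum>i<N. stat_dist N w i * 1)" unfolding avg_state_def
    by (intro sum_mono mult_left_mono stat_dist_nonneg) auto
  then show "avg_state N w X \<le> 1" using stat_dist_sum by simp
qed

lemma avg_state_full: "avg_state N w {0..<N} = 1"
  using stat_dist_sum by (simp add: avg_state_def)

lemma edge_propagation:
  assumes step: "\<And>k k'. k < N \<Longrightarrow> k' < N \<Longrightarrow> 0 < w k k' \<Longrightarrow> P k \<Longrightarrow> P k'"
    and "i0 < N" "P i0" and "j < N"
  shows "P j"
proof -
  let ?E = "{(a, e). a < N \<and> e < N \<and> 0 < w a e}"
  have "P k" if "(i0, k) \<in> ?E\<^sup>*" for k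
    using that by (induction rule: rtrancl_induct) (use assms in auto)
  moreover have "(i0, j) \<in> ?E\<^sup>*"
    using graph assms by (auto simp: weighted_graph_def connected_graph_def)
  ultimately show ?thesis by blast
qed

lemma boundary_edge:
  assumes "j0 \<in> X" "i0 < N" "i0 \<notin> X" "X \<subseteq> {0..<N}"
  obtains a e where "a \<in> X" "e < N" "e \<notin> X" "0 < w a e"
proof -
  have "j0 < N" using assms by auto
  show ?thesis
  proof (rule ccontr)
    assume no_edge: "\<not> thesis"
    have "i0 \<in> X"
    proof (rule edge_propagation[of "\<lambda>k. k \<in> X", OF _ \<open>j0 < N\<close> \<open>j0 \<in> X\<close> \<open>i0 < N\<close>])
      fix k k' assume "k < N" "k' < N" "0 < w k k'" "k \<in> X"
      then show "k' \<in> X" using no_edge that by blast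
    qed
    then show False using assms by blast
  qed
qed

lemma harmonic_const:
  fixes v :: "nat \<Rightarrow> real"
  assumes harmonic: "\<And>i. i < N \<Longrightarrow> v i = (\<Sum>k<N. trans_prob N w i k * v k)"
  obtains M where "\<And>i. i < N \<Longrightarrow> v i = M"
proof -
  obtain i0 where i0: "i0 < N" "\<And>i. i < N \<Longrightarrow> v i \<le> v i0"
    using ex_max_on_square[OF N_pos, of "\<lambda>i j. v i"] by metis
  have "v j = v i0" if "j < N" for j
  proof (rule edge_propagation[of "\<lambda>k. v k = v i0", OF _ i0(1) _ that])
    fix k k' assume kk: "k < N" "k' < N" "0 < w k k'" "v k = v i0"
    show "v k' = v i0"
      by (rule convex_comb_eq_max[of N "trans_prob N w k"])
         (use kk i0 harmonic[of k] trans_prob_nonneg trans_prob_row_sum trans_prob_pos in auto)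
  qed simp
  then show ?thesis using that by blast
qed

lemma beta_homogeneous_nonpos:
  fixes z :: "nat \<Rightarrow> nat \<Rightarrow> real"
  assumes diag: "\<And>i. i < N \<Longrightarrow> z i i = 0"
    and off: "\<And>i j. i < N \<Longrightarrow> j < N \<Longrightarrow> i \<noteq> j \<Longrightarrow>
      z i j = 1/2 * (\<Sum>k<N. trans_prob N w i k * z k j) + 1/2 * (\<Sum>k<N. trans_prob N w j k * z i k)"
    and "i < N" "j < N"
  shows "z i j \<le> 0"
proof -
  obtain i0 j0 where m: "i0 < N" "j0 < N" "\<And>i j. i < N \<Longrightarrow> j < N \<Longrightarrow> z i j \<le> z i0 j0"
    using ex_max_on_square[OF N_pos, of z] by blast
  let ?M = "z i0 j0"
  have "?M \<le> 0"
  proof (rule ccontr)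
    assume "\<not> ?M \<le> 0"
    have "z j0 j0 = ?M"
    proof (rule edge_propagation[of "\<lambda>k. z k j0 = ?M", OF _ m(1) _ m(2)])
      fix k k' assume kk: "k < N" "k' < N" "0 < w k k'" "z k j0 = ?M"
      have "k \<noteq> j0" using kk(4) \<open>\<not> ?M \<le> 0\<close> diag[OF m(2)] by auto
      have "(\<Sum>l<N. trans_prob N w j0 l * z k l) \<le> ?M"
        by (rule convex_comb_le) (use trans_prob_nonneg trans_prob_row_sum kk m in auto)
      then have "?M \<le> (\<Sum>l<N. trans_prob N w k l * z l j0)"
        using off[OF kk(1) m(2) \<open>k \<noteq> j0\<close>] kk(4) by linarith
      then show "z k' j0 = ?M"
        by (rule convex_comb_eq_max[of N "trans_prob N w k", rotated 3])
           (use trans_prob_nonneg trans_prob_row_sum kk m trans_prob_pos in auto)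
    qed simp
    then show False using diag[OF m(2)] \<open>\<not> ?M \<le> 0\<close> by simp
  qed
  then show ?thesis using m(3) assms by fastforce
qed

lemma beta_system_diff:
  assumes "beta_system N w X \<beta>" and "beta_system N w X \<beta>'"
  defines "z \<equiv> \<lambda>i j. \<beta> i j - \<beta>' i j"
  shows "\<And>i. i < N \<Longrightarrow> z i i = (\<Sum>k<N. trans_prob N w i k * z k k)"
    and "\<And>i j. i < N \<Longrightarrow> j < N \<Longrightarrow> i \<noteq> j \<Longrightarrow>
      z i j = 1/2 * (\<Sum>k<N. trans_prob N w i k * z k j) + 1/2 * (\<Sum>k<N. trans_prob N w j k * z i k)"
    and "(\<Sum>i<N. stat_dist N w i * z i i) = 0"
proof -
  have sum_diff: "(\<Sum>k<N. f k * (g k - h k)) = (\<Sum>k<N. f k * g k) - (\<Sum>k<N. f k * h k)"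
    for f g h :: "nat \<Rightarrow> real"
    by (simp add: right_diff_distrib sum_subtractf)
  note eqs = assms(1,2)[unfolded beta_system_def]
  show "z i i = (\<Sum>k<N. trans_prob N w i k * z k k)" if "i < N" for i
    using eqs(1)[THEN conjunct1, rule_format, OF that] eqs(2)[THEN conjunct1, rule_format, OF that]
    unfolding z_def sum_diff by linarith
  show "z i j = 1/2 * (\<Sum>k<N. trans_prob N w i k * z k j) + 1/2 * (\<Sum>k<N. trans_prob N w j k * z i k)"
    if "i < N" "j < N" "i \<noteq> j" for i j
    using eqs(1)[THEN conjunct2, THEN conjunct1, rule_format, OF that]
      eqs(2)[THEN conjunct2, THEN conjunct1, rule_format, OF that]
    unfolding z_def sum_diff by (simp add: algebra_simps)
  show "(\<Sum>i<N. stat_dist N w i * z i i) = 0"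
    using eqs unfolding z_def sum_diff by linarith
qed

lemma beta_system_unique:
  assumes "beta_system N w X \<beta>" and "beta_system N w X \<beta>'" and "i < N" "j < N"
  shows "\<beta> i j = \<beta>' i j"
proof -
  let ?z = "\<lambda>i j. \<beta> i j - \<beta>' i j"
  note diff = beta_system_diff[OF assms(1,2)]
  obtain M where M: "\<And>i. i < N \<Longrightarrow> ?z i i = M"
    using harmonic_const[of "\<lambda>i. ?z i i"] diff(1) by blast
  have "(\<Sum>i<N. stat_dist N w i * ?z i i) = M"
    using M stat_dist_sum by (simp add: sum_distrib_right[symmetric])
  then have diag: "\<And>i. i < N \<Longrightarrow> ?z i i = 0"
    using M diff(3) by simp
  have "?z i j \<le> 0"
    by (rule beta_homogeneous_nonpos[OF diag diff(2) assms(3,4)])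
  moreover have "- ?z i j \<le> 0"
  proof (rule beta_homogeneous_nonpos[of "\<lambda>i j. - ?z i j", OF _ _ assms(3,4)])
    show "- ?z i j = 1/2 * (\<Sum>k<N. trans_prob N w i k * - ?z k j) + 1/2 * (\<Sum>k<N. trans_prob N w j k * - ?z i k)"
      if "i < N" "j < N" "i \<noteq> j" for i j
      unfolding mult_minus_right sum_negf using diff(2)[OF that] by linarith
  qed (use diag in simp)
  ultimately show ?thesis by simp
qed

end

section \<open>Death-Birth updating in one layer\<close>

definition choice_prob :: "nat \<Rightarrow> (nat \<Rightarrow> nat \<Rightarrow> real) \<Rightarrow> (nat \<Rightarrow> real) \<Rightarrow> nat \<Rightarrow> nat \<Rightarrow> real" where
  "choice_prob N w F i j = w i j * F j / (\<Sum>k<N. w i k * F k)"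

definition progress_bound :: "nat \<Rightarrow> (nat \<Rightarrow> nat \<Rightarrow> real) \<Rightarrow> real" where
  "progress_bound N w = Min (insert 1 ((\<lambda>(i, j). w i j / (3 * real N * strength N w i)) `
      {(i, j). i < N \<and> j < N \<and> 0 < w i j}))"

definition neutral_step :: "nat \<Rightarrow> (nat \<Rightarrow> nat \<Rightarrow> real) \<Rightarrow> (nat set \<Rightarrow> real) \<Rightarrow> nat set \<Rightarrow> real" where
  "neutral_step N w g X = (\<Sum>i<N. 1 / real N * (\<Sum>j<N. trans_prob N w i j * g (copy_type X i j)))"

lemma copy_type_in_Pow: "X \<subseteq> {0..<N} \<Longrightarrow> i < N \<Longrightarrow> copy_type X i j \<in> Pow {0..<N}"
  by (auto simp: copy_type_def)

lemma layer_step_expectation: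
  assumes X: "X \<subseteq> {0..<N}"
  shows "(\<Sum>Y\<in>Pow {0..<N}. layer_step N w F X Y * h Y) =
    (\<Sum>i<N. 1 / real N * (\<Sum>j<N. choice_prob N w F i j * h (copy_type X i j)))"
proof -
  have "(\<Sum>Y\<in>Pow {0..<N}. layer_step N w F X Y * h Y) =
     (\<Sum>i<N. 1 / real N * (\<Sum>j<N. \<Sum>Y\<in>Pow {0..<N}.
        (if copy_type X i j = Y then choice_prob N w F i j else 0) * h Y))"
    unfolding layer_step_def choice_prob_def sum_distrib_right sum_distrib_left mult.assoc
    by (subst sum.swap) (simp add: sum_distrib_left sum.swap[where A="Pow {0..<N}"])
  also have "\<dots> = (\<Sum>i<N. 1 / real N * (\<Sum>j<N. choice_prob N w F i j * h (copy_type X i j)))"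
    using copy_type_in_Pow[OF X]
    by (intro sum.cong refl arg_cong2[where f="(*)"])
       (simp add: if_distrib[where f="\<lambda>x. x * _"] sum.delta cong: if_cong)
  finally show ?thesis .
qed

context random_walk
begin

lemma finite_edges: "finite {(i, j). i < N \<and> j < N \<and> 0 < w i j}"
  by (rule finite_subset[of _ "{..<N} \<times> {..<N}"]) auto

lemma progress_bound_pos: "0 < progress_bound N w"
proof -
  have "0 < w i j / (3 * real N * strength N w i)" if "i < N" "0 < w i j" for i j
    using that strength_pos[of i] N_pos by simp
  then show ?thesis unfolding progress_bound_def using finite_edges by (subst Min_gr_iff) auto
qed

lemma progress_bound_le_1: "progress_bound N w \<le> 1"
  unfolding progress_bound_def using finite_edges by (intro Min_le) auto

lemma progress_bound_le:
  assumes "i < N" "j < N" "0 < w i j"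
  shows "progress_bound N w \<le> w i j / (3 * real N * strength N w i)"
  unfolding progress_bound_def using finite_edges assms by (intro Min_le) auto

context
  fixes F :: "nat \<Rightarrow> real"
  assumes F_bounds: "\<And>k. k < N \<Longrightarrow> 1/2 \<le> F k \<and> F k \<le> 3/2"
begin

lemma choice_denom_pos: "i < N \<Longrightarrow> 0 < (\<Sum>k<N. w i k * F k)"
proof -
  assume i: "i < N"
  have "strength N w i / 2 = (\<Sum>k<N. w i k * (1/2))"
    by (simp add: strength_def sum_divide_distrib)
  also have "\<dots> \<le> (\<Sum>k<N. w i k * F k)"
    by (intro sum_mono mult_left_mono) (use F_bounds weight_nonneg i in auto)
  finally show ?thesis using strength_pos[OF i] by linarith
qed

lemma choice_denom_le: "i < N \<Longrightarrow> (\<Sum>k<N. w i k * F k) \<le> 3/2 * strength N w i"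
proof -
  assume i: "i < N"
  have "(\<Sum>k<N. w i k * F k) \<le> (\<Sum>k<N. w i k * (3/2))"
    by (intro sum_mono mult_left_mono) (use F_bounds weight_nonneg i in auto)
  also have "\<dots> = (\<Sum>k<N. w i k) * (3/2)"
    by (rule sum_distrib_right[symmetric])
  finally show ?thesis by (simp add: strength_def)
qed

lemma choice_prob_nonneg: "i < N \<Longrightarrow> j < N \<Longrightarrow> 0 \<le> choice_prob N w F i j"
  unfolding choice_prob_def using choice_denom_pos[of i] weight_nonneg[of i j] F_bounds[of j] by auto

lemma choice_prob_row_sum: "i < N \<Longrightarrow> (\<Sum>j<N. choice_prob N w F i j) = 1"
  unfolding choice_prob_def using choice_denom_pos[of i] by (simp add: sum_divide_distrib[symmetric])

lemma choice_prob_lower: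
  assumes "i < N" "j < N" "0 < w i j"
  shows "w i j / (3 * strength N w i) \<le> choice_prob N w F i j"
proof -
  have s: "0 < strength N w i" using strength_pos assms(1) .
  have "w i j / (3 * strength N w i) = w i j * (1/2) / (3/2 * strength N w i)" by simp
  also have "\<dots> \<le> w i j * F j / (3/2 * strength N w i)"
    using F_bounds[OF assms(2)] assms s by (intro divide_right_mono mult_left_mono) auto
  also have "\<dots> \<le> w i j * F j / (\<Sum>k<N. w i k * F k)"
    using F_bounds[OF assms(2)] assms s choice_denom_pos[OF assms(1)] choice_denom_le[OF assms(1)]
    by (intro divide_left_mono) auto
  finally show ?thesis by (simp add: choice_prob_def)
qed

lemma layer_step_nonneg: "0 \<le> layer_step N w F X Y"
  unfolding layer_step_def
  by (intro sum_nonneg mult_nonneg_nonneg) (use choice_prob_nonneg in \<open>auto simp: choice_prob_def\<close>)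

lemma layer_step_row_sum: "X \<subseteq> {0..<N} \<Longrightarrow> (\<Sum>Y\<in>Pow {0..<N}. layer_step N w F X Y) = 1"
  using layer_step_expectation[of X N w F "\<lambda>_. 1"] choice_prob_row_sum N_pos by simp

lemma layer_step_monomorphic:
  assumes "X = {} \<or> X = {0..<N}"
  shows "(\<Sum>Y\<in>Pow {0..<N}. layer_step N w F X Y * ind (Y = X)) = 1"
proof -
  have "copy_type X i j = X" if "i < N" "j < N" for i j
    using assms that by (auto simp: copy_type_def)
  moreover have "X \<subseteq> {0..<N}" using assms by auto
  ultimately show ?thesis
    using layer_step_expectation[of X N w F "\<lambda>Y. ind (Y = X)"] choice_prob_row_sum N_pos by simp
qed

text \<open>From a mixed configuration, some individual i outside X has a neighbour a in X (the graph is
  connected), and i dies and copies a with probability at least the progress bound.\<close>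

lemma layer_step_progress:
  assumes X: "X \<subseteq> {0..<N}" "X \<noteq> {}" "X \<noteq> {0..<N}"
  shows "progress_bound N w \<le> (\<Sum>Y\<in>Pow {0..<N}. layer_step N w F X Y * ind (card Y = Suc (card X)))"
proof -
  obtain j0 where j0: "j0 \<in> X" using X by auto
  obtain i0 where "i0 \<in> {0..<N}" "i0 \<notin> X" using X(1,3) by blast
  then have i0: "i0 < N" "i0 \<notin> X" by auto
  obtain a i where ai: "a \<in> X" "i < N" "i \<notin> X" "0 < w a i"
    using boundary_edge[OF j0 i0 X(1)] by metis
  have a: "a < N" using ai X by auto
  have wia: "0 < w i a" using ai a weight_sym[of a i] by simp
  let ?f = "\<lambda>i j. choice_prob N w F i j * ind (card (copy_type X i j) = Suc (card X))"
  have f_nonneg: "0 \<le> (\<Sum>j<N. ?f i' j)" if "i' < N" for i'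
    using choice_prob_nonneg that by (intro sum_nonneg) simp
  have "card (copy_type X i a) = Suc (card X)"
    using ai finite_subset[OF X(1)] by (simp add: copy_type_def)
  have "progress_bound N w \<le> 1 / real N * (w i a / (3 * strength N w i))"
    using progress_bound_le[OF ai(2) a wia] by simp
  also have "\<dots> \<le> 1 / real N * ?f i a"
    using choice_prob_lower[OF ai(2) a wia] \<open>card (copy_type X i a) = Suc (card X)\<close>
    by (intro mult_left_mono) auto
  also have "\<dots> \<le> 1 / real N * (\<Sum>j<N. ?f i j)"
    by (intro mult_left_mono member_le_sum) (use choice_prob_nonneg ai a in auto)
  also have "\<dots> \<le> (\<Sum>i<N. 1 / real N * (\<Sum>j<N. ?f i j))"
    by (rule member_le_sum) (use ai f_nonneg in auto)
  finally show ?thesis unfolding layer_step_expectation[OF X(1)] .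
qed

text \<open>Only the deviation of the choice probabilities from the neutral ones moves the
  stationary-weighted frequency, since the neutral walk preserves the stationary distribution.\<close>

lemma layer_step_avg_state:
  assumes X: "X \<subseteq> {0..<N}"
  shows "(\<Sum>Y\<in>Pow {0..<N}. layer_step N w F X Y * avg_state N w Y) = avg_state N w X
    + (\<Sum>i<N. stat_dist N w i / real N *
        (\<Sum>j<N. (choice_prob N w F i j - trans_prob N w i j) * ind (j \<in> X)))"
proof -
  let ?q = "choice_prob N w F" and ?p = "trans_prob N w" and ?\<pi> = "stat_dist N w"
  let ?x = "\<lambda>j. ind (j \<in> X)"
  have row: "(\<Sum>j<N. ?q i j * avg_state N w (copy_type X i j)) =
      avg_state N w X + ?\<pi> i * ((\<Sum>j<N. ?q i j * ?x j) - ?x i)" if "i < N" for i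
  proof -
    have "(\<Sum>j<N. ?q i j * avg_state N w (copy_type X i j)) =
        (\<Sum>j<N. ?q i j) * avg_state N w X + ?\<pi> i * (\<Sum>j<N. ?q i j * ?x j) - ?\<pi> i * ?x i * (\<Sum>j<N. ?q i j)"
      using that by (simp add: avg_state_copy_type algebra_simps sum.distrib sum_subtractf
          sum_distrib_left sum_distrib_right)
    then show ?thesis using choice_prob_row_sum[OF that] by (simp add: algebra_simps)
  qed
  have split: "(\<Sum>j<N. ?q i j * ?x j) - ?x i =
      (\<Sum>j<N. (?q i j - ?p i j) * ?x j) + ((\<Sum>j<N. ?p i j * ?x j) - ?x i)" for i
    by (simp add: left_diff_distrib sum_subtractf)
  have "(\<Sum>i<N. ?\<pi> i / real N * ((\<Sum>j<N. ?p i j * ?x j) - ?x i)) = 0"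
    using stat_dist_sum_trans_prob[of ?x]
    by (simp add: right_diff_distrib sum_subtractf sum_divide_distrib[symmetric])
  then have "(\<Sum>i<N. ?\<pi> i / real N * ((\<Sum>j<N. ?q i j * ?x j) - ?x i)) =
      (\<Sum>i<N. ?\<pi> i / real N * (\<Sum>j<N. (?q i j - ?p i j) * ?x j))"
    unfolding split distrib_left sum.distrib by simp
  moreover have "(\<Sum>Y\<in>Pow {0..<N}. layer_step N w F X Y * avg_state N w Y) =
      avg_state N w X + (\<Sum>i<N. ?\<pi> i / real N * ((\<Sum>j<N. ?q i j * ?x j) - ?x i))"
    unfolding layer_step_expectation[OF X] using N_pos
    by (simp add: row distrib_left sum.distrib)
  ultimately show ?thesis by simp
qed

end

lemma layer_step_neutral_expectation:
  "X \<subseteq> {0..<N} \<Longrightarrow> (\<Sum>Y\<in>Pow {0..<N}. layer_step N w (\<lambda>_. 1) X Y * h Y) = neutral_step N w h X"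
  unfolding layer_step_expectation neutral_step_def
  by (simp add: choice_prob_def trans_prob_def strength_def)

lemma neutral_step_const: "neutral_step N w (\<lambda>_. c) X = c"
  using N_pos by (simp add: neutral_step_def sum_distrib_right[symmetric] trans_prob_row_sum)

lemma neutral_step_perturb_site:
  assumes "a < N"
  shows "(\<Sum>i<N. 1 / real N * (\<Sum>j<N. trans_prob N w i j * (h i j + (if i = a then g j else 0)))) =
      (\<Sum>i<N. 1 / real N * (\<Sum>j<N. trans_prob N w i j * h i j))
      + 1 / real N * (\<Sum>j<N. trans_prob N w a j * g j)"
proof -
  have "(\<Sum>i<N. 1 / real N * (\<Sum>j<N. trans_prob N w i j * (h i j + (if i = a then g j else 0)))) =
      (\<Sum>i<N. 1 / real N * (\<Sum>j<N. trans_prob N w i j * h i j)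
        + (if i = a then 1 / real N * (\<Sum>j<N. trans_prob N w a j * g j) else 0))"
    by (intro sum.cong refl) (simp add: distrib_left sum.distrib)
  then show ?thesis using assms by (simp add: sum.distrib)
qed

lemma neutral_step_perturb_site_const:
  assumes "a < N"
  shows "(\<Sum>i<N. 1 / real N * (\<Sum>j<N. trans_prob N w i j * (c + (if i = a then g j else 0)))) =
      c + 1 / real N * (\<Sum>j<N. trans_prob N w a j * g j)"
  using neutral_step_perturb_site[OF assms, of "\<lambda>_ _. c" g] neutral_step_const[of c "{}"]
  by (simp add: neutral_step_def)

lemma neutral_step_indicator:
  assumes a: "a < N"
  shows "neutral_step N w (\<lambda>Y. ind (a \<in> Y)) X =
    (1 - 1 / real N) * ind (a \<in> X) + 1 / real N * (\<Sum>j<N. trans_prob N w a j * ind (j \<in> X))"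
proof -
  have "ind (a \<in> copy_type X i j) = ind (a \<in> X) + (if i = a then ind (j \<in> X) - ind (a \<in> X) else 0)" for i j
    by (auto simp: copy_type_def ind_def)
  then have "neutral_step N w (\<lambda>Y. ind (a \<in> Y)) X =
      ind (a \<in> X) + 1 / real N * (\<Sum>j<N. trans_prob N w a j * (ind (j \<in> X) - ind (a \<in> X)))"
    unfolding neutral_step_def by (simp only: neutral_step_perturb_site_const[OF a])
  also have "(\<Sum>j<N. trans_prob N w a j * (ind (j \<in> X) - ind (a \<in> X))) =
      (\<Sum>j<N. trans_prob N w a j * ind (j \<in> X)) - ind (a \<in> X)"
    by (rule trans_prob_sum_minus_const[OF a])
  finally show ?thesis by (simp add: algebra_simps)
qed

lemma neutral_step_indicator_pair:
  assumes a: "a < N" and e: "e < N" and "a \<noteq> e"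
  shows "neutral_step N w (\<lambda>Y. ind (a \<in> Y) * ind (e \<in> Y)) X =
    (1 - 2 / real N) * (ind (a \<in> X) * ind (e \<in> X))
    + 1 / real N * (\<Sum>k<N. trans_prob N w a k * (ind (k \<in> X) * ind (e \<in> X)))
    + 1 / real N * (\<Sum>k<N. trans_prob N w e k * (ind (a \<in> X) * ind (k \<in> X)))"
proof -
  let ?x = "\<lambda>j. ind (j \<in> X)"
  have "ind (a \<in> copy_type X i j) * ind (e \<in> copy_type X i j) =
     (?x a * ?x e + (if i = e then ?x a * (?x j - ?x e) else 0))
     + (if i = a then (?x j - ?x a) * ?x e else 0)" for i j
    using \<open>a \<noteq> e\<close> by (auto simp: copy_type_def ind_def)
  then have "neutral_step N w (\<lambda>Y. ind (a \<in> Y) * ind (e \<in> Y)) X =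
      ?x a * ?x e + 1 / real N * (\<Sum>j<N. trans_prob N w e j * (?x a * (?x j - ?x e)))
      + 1 / real N * (\<Sum>j<N. trans_prob N w a j * ((?x j - ?x a) * ?x e))"
    unfolding neutral_step_def
    by (simp only: neutral_step_perturb_site[OF a] neutral_step_perturb_site_const[OF e])
  also have "(\<Sum>j<N. trans_prob N w a j * ((?x j - ?x a) * ?x e)) =
      (\<Sum>k<N. trans_prob N w a k * (?x k * ?x e)) - ?x a * ?x e"
    using trans_prob_sum_minus_const[OF a, of "\<lambda>j. ?x j * ?x e" "?x a * ?x e"]
    by (simp add: left_diff_distrib)
  also have "(\<Sum>j<N. trans_prob N w e j * (?x a * (?x j - ?x e))) =
      (\<Sum>k<N. trans_prob N w e k * (?x a * ?x k)) - ?x a * ?x e"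
    using trans_prob_sum_minus_const[OF e, of "\<lambda>j. ?x a * ?x j" "?x a * ?x e"]
    by (simp add: right_diff_distrib)
  finally show ?thesis by (simp add: algebra_simps)
qed

lemma neutral_step_avg_state:
  assumes "X \<subseteq> {0..<N}"
  shows "neutral_step N w (avg_state N w) X = avg_state N w X"
  using layer_step_avg_state[of "\<lambda>_. 1", OF _ assms] layer_step_neutral_expectation[OF assms]
  by (simp add: choice_prob_def trans_prob_def strength_def)

end

section \<open>Absorption of the two-layer chain\<close>

lemma finite_states: "finite (states N)"
  by (simp add: states_def)

lemma mem_states_iff: "s \<in> states N \<longleftrightarrow> fst s \<subseteq> {0..<N} \<and> snd s \<subseteq> {0..<N}"
  by (cases s) (auto simp: states_def)

lemma card_subset_range:
  assumes "X \<subseteq> {0..<N}"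
  shows "card X \<le> N" "card X = 0 \<longleftrightarrow> X = {}" "card X = N \<longleftrightarrow> X = {0..<N}"
  using card_mono[OF _ assms] finite_subset[OF assms] card_subset_eq[OF _ assms] by auto

definition mixed_states :: "nat \<Rightarrow> (nat set \<times> nat set \<Rightarrow> nat set) \<Rightarrow> (nat set \<times> nat set) set" where
  "mixed_states N layer = {t \<in> states N. 0 < card (layer t) \<and> card (layer t) < N}"

lemma mixed_states_subset: "mixed_states N layer \<subseteq> states N"
  by (auto simp: mixed_states_def)

lemma not_mixed_states:
  assumes "t \<in> states N" "t \<notin> mixed_states N layer" "layer t \<subseteq> {0..<N}"
  shows "layer t = {} \<or> layer t = {0..<N}"
  using assms card_subset_range[OF assms(3)] by (auto simp: mixed_states_def)

lemma power_div_le_geometric: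
  fixes q :: real
  assumes q: "0 \<le> q" "q < 1" and "0 < M"
  obtains C \<rho> where "0 < \<rho>" "\<rho> < 1" "\<And>n. q ^ (n div M) \<le> C * \<rho> ^ n"
proof -
  define q' where "q' = max q (1/2)"
  have q': "q \<le> q'" "1/2 \<le> q'" "q' < 1" using q by (auto simp: q'_def)
  define \<rho> where "\<rho> = root M q'"
  have \<rho>: "0 < \<rho>" "\<rho> < 1" "\<rho> ^ M = q'"
    using q' \<open>0 < M\<close> by (auto simp: \<rho>_def real_root_lt_1_iff real_root_pow_pos2)
  have "q ^ (n div M) \<le> (1 / \<rho> ^ M) * \<rho> ^ n" for n
  proof -
    have "q ^ (n div M) \<le> q' ^ (n div M)" using q q' by (intro power_mono) auto
    also have "\<dots> = \<rho> ^ (M * (n div M))" using \<rho> by (simp add: power_mult)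
    also have "\<dots> \<le> \<rho> ^ (n - M)"
    proof (rule power_decreasing)
      have "n < M * (n div M) + M" using \<open>0 < M\<close>
        by (metis add.commute div_mult_mod_eq mod_less_divisor mult.commute nat_add_left_cancel_less)
      then show "n - M \<le> M * (n div M)" by linarith
    qed (use \<rho> in auto)
    also have "\<dots> \<le> (1 / \<rho> ^ M) * \<rho> ^ n"
    proof (cases "M \<le> n")
      case True
      then have "\<rho> ^ n = \<rho> ^ (n - M) * \<rho> ^ M" by (metis le_add_diff_inverse2 power_add)
      moreover have "0 < \<rho> ^ M" using \<rho>(3) q'(2) by simp
      ultimately show ?thesis by (simp del: power_eq_0_iff)
    next
      case False
      then have "\<rho> ^ M \<le> \<rho> ^ n" using \<rho> by (intro power_decreasing) auto
      then show ?thesis using False \<rho> q'(2) by (simp add: field_simps)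
    qed
    finally show ?thesis .
  qed
  then show ?thesis using that \<rho> by blast
qed

locale markov_kernel =
  fixes N :: nat and w1 w2 :: "nat \<Rightarrow> nat \<Rightarrow> real" and b c r \<delta> :: real
  assumes kernel_nonneg: "s \<in> states N \<Longrightarrow> t \<in> states N \<Longrightarrow> 0 \<le> kernel N w1 w2 b c r \<delta> s t"
    and kernel_row_sum: "s \<in> states N \<Longrightarrow> (\<Sum>t\<in>states N. kernel N w1 w2 b c r \<delta> s t) = 1"
begin

abbreviation "K \<equiv> kernel N w1 w2 b c r \<delta>"
abbreviation "Kp \<equiv> kernel_pow N w1 w2 b c r \<delta>"

lemma kernel_pow_Suc_left:
  assumes "s \<in> states N" "t \<in> states N"
  shows "Kp (Suc n) s t = (\<Sum>u\<in>states N. K s u * Kp n u t)"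
  using assms(2)
proof (induction n arbitrary: t)
  case 0
  then show ?case
    using assms(1) by (simp add: if_distrib[where f="\<lambda>x. x * _"] if_distrib[where f="\<lambda>x. _ * x"]
        sum.delta sum.delta' finite_states cong: if_cong)
next
  case (Suc n)
  have "Kp (Suc (Suc n)) s t = (\<Sum>u\<in>states N. (\<Sum>v\<in>states N. K s v * Kp n v u) * K u t)"
    using Suc by (simp del: kernel_pow.simps(2) add: kernel_pow.simps(2)[of _ _ _ _ _ _ _ "Suc n"])
  also have "\<dots> = (\<Sum>v\<in>states N. K s v * (\<Sum>u\<in>states N. Kp n v u * K u t))"
    by (simp add: sum_distrib_left sum_distrib_right mult.assoc) (rule sum.swap)
  finally show ?case by simp
qed

lemma kernel_pow_add:
  assumes "t \<in> states N"
  shows "Kp (n + m) s t = (\<Sum>u\<in>states N. Kp n s u * Kp m u t)"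
  using assms
proof (induction m arbitrary: t)
  case 0
  then show ?case
    by (simp add: if_distrib[where f="\<lambda>x. _ * x"] sum.delta' finite_states cong: if_cong)
next
  case (Suc m)
  have "Kp (n + Suc m) s t = (\<Sum>v\<in>states N. (\<Sum>u\<in>states N. Kp n s u * Kp m u v) * K v t)"
    using Suc by simp
  also have "\<dots> = (\<Sum>u\<in>states N. Kp n s u * (\<Sum>v\<in>states N. Kp m u v * K v t))"
    by (simp add: sum_distrib_left sum_distrib_right mult.assoc) (rule sum.swap)
  finally show ?case by simp
qed

lemma kernel_pow_nonneg: "s \<in> states N \<Longrightarrow> t \<in> states N \<Longrightarrow> 0 \<le> Kp n s t"
  by (induction n arbitrary: t) (auto simp: kernel_nonneg sum_nonneg)

lemma kernel_pow_row_sum: "s \<in> states N \<Longrightarrow> (\<Sum>t\<in>states N. Kp n s t) = 1"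
proof (induction n)
  case 0 then show ?case by (simp add: sum.delta finite_states)
next
  case (Suc n)
  have "(\<Sum>t\<in>states N. Kp (Suc n) s t) = (\<Sum>u\<in>states N. Kp n s u * (\<Sum>t\<in>states N. K u t))"
    by (simp add: sum_distrib_left) (rule sum.swap)
  then show ?case using Suc by (simp add: kernel_row_sum)
qed

lemma kernel_pow_sum_le_1:
  assumes "s \<in> states N" "A \<subseteq> states N"
  shows "(\<Sum>t\<in>A. Kp n s t) \<le> 1"
proof -
  have "(\<Sum>t\<in>A. Kp n s t) \<le> (\<Sum>t\<in>states N. Kp n s t)"
    by (rule sum_mono2[OF finite_states assms(2)]) (use kernel_pow_nonneg assms in auto)
  then show ?thesis using kernel_pow_row_sum[OF assms(1)] by simp
qed

lemma kernel_pow_expectation_abs_le: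
  assumes "s \<in> states N" and "A \<subseteq> states N"
    and h: "\<And>t. t \<in> states N \<Longrightarrow> \<bar>h t\<bar> \<le> B * ind (t \<in> A)"
  shows "\<bar>\<Sum>t\<in>states N. Kp n s t * h t\<bar> \<le> B * (\<Sum>t\<in>A. Kp n s t)"
proof -
  have "\<bar>\<Sum>t\<in>states N. Kp n s t * h t\<bar> \<le> (\<Sum>t\<in>states N. Kp n s t * (B * ind (t \<in> A)))"
    using kernel_pow_nonneg[OF assms(1)] h
    by (intro order.trans[OF sum_abs] sum_mono) (simp add: abs_mult mult_left_mono)
  also have "\<dots> = B * (\<Sum>t\<in>states N. Kp n s t * ind (t \<in> A))"
    by (simp add: sum_distrib_left ac_simps)
  also have "(\<Sum>t\<in>states N. Kp n s t * ind (t \<in> A)) = (\<Sum>t\<in>A. Kp n s t)"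
    using sum_filter_eq_sum_ind[where A="states N" and P="\<lambda>t. t \<in> A" and f="Kp n s"]
      finite_states assms(2) by (simp add: Int_absorb1 Collect_conj_eq Collect_mem_eq)
  finally show ?thesis .
qed

lemma kernel_pow_closed_set:
  assumes C: "C \<subseteq> states N" and closed: "\<And>u. u \<in> C \<Longrightarrow> (\<Sum>t\<in>C. K u t) = 1"
    and "s \<in> C" and "t \<in> states N - C"
  shows "Kp n s t = 0"
  using assms(4)
proof (induction n arbitrary: t)
  case 0 then show ?case using \<open>s \<in> C\<close> by auto
next
  case (Suc n)
  have leave: "K u t = 0" if "u \<in> C" for u
  proof -
    have u: "u \<in> states N" using that C by blast
    have "(\<Sum>t\<in>states N - C. K u t) = 0"
      using sum.subset_diff[OF C finite_states, of "K u"] kernel_row_sum[OF u] closed[OF that] by linarith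
    moreover have "K u t \<le> (\<Sum>t\<in>states N - C. K u t)"
      by (rule member_le_sum) (use Suc.prems u kernel_nonneg in \<open>auto simp: finite_states\<close>)
    ultimately show ?thesis using kernel_nonneg[OF u, of t] Suc.prems by simp
  qed
  have "Kp n s u * K u t = 0" if "u \<in> states N" for u
    using leave Suc.IH[of u] that by (cases "u \<in> C") auto
  then show ?case by (simp add: sum.neutral)
qed

end

text \<open>Climbing straight from the interior to M takes at most M steps, each of probability at
  least \<eta>; this yields geometric decay of the mass left in the interior.\<close>

locale absorbing_count = markov_kernel +
  fixes cnt :: "nat set \<times> nat set \<Rightarrow> nat" and \<eta> :: real and M :: nat
  assumes cnt_le: "\<And>s. s \<in> states N \<Longrightarrow> cnt s \<le> M"
    and absorbed: "\<And>s. s \<in> states N \<Longrightarrow> cnt s = 0 \<or> cnt s = M \<Longrightarrow>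
      (\<Sum>t\<in>{t\<in>states N. cnt t = cnt s}. K s t) = 1"
    and progress: "\<And>s. s \<in> states N \<Longrightarrow> 0 < cnt s \<Longrightarrow> cnt s < M \<Longrightarrow>
      \<eta> \<le> (\<Sum>t\<in>{t\<in>states N. cnt t = Suc (cnt s)}. K s t)"
    and \<eta>_pos: "0 < \<eta>" and \<eta>_le_1: "\<eta> \<le> 1" and M_pos: "0 < M"
begin

abbreviation "mid_states \<equiv> {t\<in>states N. 0 < cnt t \<and> cnt t < M}"

lemma kernel_pow_absorbed:
  assumes s: "s \<in> states N" "cnt s = 0 \<or> cnt s = M"
  shows "(\<Sum>t\<in>{t\<in>states N. cnt t = cnt s}. Kp n s t) = 1"
    and "t \<in> states N \<Longrightarrow> cnt t \<noteq> cnt s \<Longrightarrow> Kp n s t = 0"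
proof -
  let ?C = "{t\<in>states N. cnt t = cnt s}"
  have closed: "(\<Sum>t\<in>?C. K u t) = 1" if "u \<in> ?C" for u
    using absorbed[of u] that s by auto
  show leave: "Kp n s t = 0" if "t \<in> states N" "cnt t \<noteq> cnt s" for t
    using kernel_pow_closed_set[of ?C, OF _ closed] s that by auto
  have "(\<Sum>t\<in>states N - ?C. Kp n s t) = 0"
    using leave by (intro sum.neutral) blast
  then show "(\<Sum>t\<in>?C. Kp n s t) = 1"
    using sum.subset_diff[of ?C "states N" "Kp n s"] kernel_pow_row_sum[OF s(1)] finite_states by auto
qed

lemma kernel_pow_reach_top:
  "s \<in> states N \<Longrightarrow> 0 < cnt s \<Longrightarrow> M - cnt s \<le> k \<Longrightarrow>
     \<eta> ^ k \<le> (\<Sum>t\<in>{t\<in>states N. cnt t = M}. Kp k s t)"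
proof (induction k arbitrary: s)
  case 0
  then show ?case using cnt_le[of s] kernel_pow_absorbed(1)[of s 0] by auto
next
  case (Suc k)
  let ?top = "{t\<in>states N. cnt t = M}" and ?up = "{t\<in>states N. cnt t = Suc (cnt s)}"
  show ?case
  proof (cases "cnt s = M")
    case True
    then show ?thesis
      using kernel_pow_absorbed(1)[of s "Suc k"] Suc.prems
        power_le_one[OF less_imp_le[OF \<eta>_pos] \<eta>_le_1, of "Suc k"] by simp
  next
    case False
    then have "cnt s < M" using cnt_le[of s] Suc.prems by auto
    have "\<eta> * \<eta> ^ k \<le> (\<Sum>u\<in>?up. K s u) * \<eta> ^ k"
      using progress[of s] Suc.prems \<open>cnt s < M\<close> \<eta>_pos by (intro mult_right_mono) auto
    also have "\<dots> \<le> (\<Sum>u\<in>?up. K s u * (\<Sum>t\<in>?top. Kp k u t))"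
      unfolding sum_distrib_right
      using Suc.IH Suc.prems \<open>cnt s < M\<close> kernel_nonneg by (intro sum_mono mult_left_mono) auto
    also have "\<dots> \<le> (\<Sum>u\<in>states N. K s u * (\<Sum>t\<in>?top. Kp k u t))"
    proof (rule sum_mono2[OF finite_states])
      fix u assume "u \<in> states N - ?up"
      then have u: "u \<in> states N" by blast
      have "0 \<le> K s u" using Suc.prems(1) u kernel_nonneg by blast
      moreover have "0 \<le> (\<Sum>t\<in>?top. Kp k u t)"
        by (rule sum_nonneg) (use kernel_pow_nonneg u in blast)
      ultimately show "0 \<le> K s u * (\<Sum>t\<in>?top. Kp k u t)" by simp
    qed auto
    also have "\<dots> = (\<Sum>t\<in>?top. Kp (Suc k) s t)"
      using Suc.prems(1) kernel_pow_Suc_left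
      by (simp add: sum_distrib_left) (subst sum.swap, intro sum.cong, auto)
    finally show ?thesis by simp
  qed
qed

lemma mid_states_mass_step:
  assumes "s \<in> mid_states"
  shows "(\<Sum>t\<in>mid_states. Kp M s t) \<le> 1 - \<eta> ^ M"
proof -
  have "(\<Sum>t\<in>mid_states. Kp M s t) + (\<Sum>t\<in>{t\<in>states N. cnt t = M}. Kp M s t)
      = (\<Sum>t\<in>mid_states \<union> {t\<in>states N. cnt t = M}. Kp M s t)"
    by (rule sum.union_disjoint[symmetric]) (auto simp: finite_states)
  also have "\<dots> \<le> 1" by (rule kernel_pow_sum_le_1) (use assms in auto)
  finally show ?thesis using kernel_pow_reach_top[of s M] assms by auto
qed

lemma mid_states_mass_shift:
  assumes s: "s \<in> states N"
  shows "(\<Sum>t\<in>mid_states. Kp (n + M) s t) \<le> (1 - \<eta> ^ M) * (\<Sum>t\<in>mid_states. Kp n s t)"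
proof -
  have "(\<Sum>t\<in>mid_states. Kp (n + M) s t) = (\<Sum>t\<in>mid_states. \<Sum>u\<in>states N. Kp n s u * Kp M u t)"
    using kernel_pow_add by (intro sum.cong) auto
  also have "\<dots> = (\<Sum>u\<in>states N. Kp n s u * (\<Sum>t\<in>mid_states. Kp M u t))"
    by (simp add: sum_distrib_left) (rule sum.swap)
  also have "\<dots> = (\<Sum>u\<in>mid_states. Kp n s u * (\<Sum>t\<in>mid_states. Kp M u t))"
  proof (rule sum.mono_neutral_right[OF finite_states])
    show "\<forall>u\<in>states N - mid_states. Kp n s u * (\<Sum>t\<in>mid_states. Kp M u t) = 0"
    proof
      fix u assume u: "u \<in> states N - mid_states"
      then have "cnt u = 0 \<or> cnt u = M" using cnt_le[of u] by auto
      then have "(\<Sum>t\<in>mid_states. Kp M u t) = 0"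
        using u kernel_pow_absorbed(2)[of u] by (intro sum.neutral) auto
      then show "Kp n s u * (\<Sum>t\<in>mid_states. Kp M u t) = 0" by simp
    qed
  qed auto
  also have "\<dots> \<le> (\<Sum>u\<in>mid_states. Kp n s u * (1 - \<eta> ^ M))"
    by (intro sum_mono mult_left_mono) (use mid_states_mass_step kernel_pow_nonneg s in auto)
  also have "\<dots> = (1 - \<eta> ^ M) * (\<Sum>u\<in>mid_states. Kp n s u)"
    by (simp add: sum_distrib_left mult.commute)
  finally show ?thesis .
qed

lemma mid_states_mass_bound:
  assumes "s \<in> states N"
  shows "(\<Sum>t\<in>mid_states. Kp n s t) \<le> (1 - \<eta> ^ M) ^ (n div M)"
proof (induction n rule: less_induct)
  case (less n)
  show ?case
  proof (cases "n < M")
    case True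
    then show ?thesis using kernel_pow_sum_le_1[OF assms, of mid_states n] by auto
  next
    case False
    then obtain m where m: "n = m + M" by (metis add.commute le_add_diff_inverse not_less)
    have "0 \<le> 1 - \<eta> ^ M" using \<eta>_pos \<eta>_le_1 by (simp add: power_le_one)
    have "(\<Sum>t\<in>mid_states. Kp n s t) \<le> (1 - \<eta> ^ M) * (\<Sum>t\<in>mid_states. Kp m s t)"
      using mid_states_mass_shift[OF assms, of m] m by simp
    also have "\<dots> \<le> (1 - \<eta> ^ M) * (1 - \<eta> ^ M) ^ (m div M)"
      using less.IH[of m] m M_pos \<open>0 \<le> 1 - \<eta> ^ M\<close> by (intro mult_left_mono) auto
    also have "\<dots> = (1 - \<eta> ^ M) ^ (n div M)" using m M_pos by simp
    finally show ?thesis .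
  qed
qed

end

context markov_kernel
begin

lemma mixed_layer_mass_bound:
  fixes layer :: "nat set \<times> nat set \<Rightarrow> nat set" and w :: "nat \<Rightarrow> nat \<Rightarrow> real"
    and F :: "nat set \<times> nat set \<Rightarrow> nat \<Rightarrow> real"
  assumes "random_walk N w"
    and layer_states: "\<And>s. s \<in> states N \<Longrightarrow> layer s \<subseteq> {0..<N}"
    and marginal: "\<And>s g. s \<in> states N \<Longrightarrow>
      (\<Sum>t\<in>states N. K s t * g (layer t)) = (\<Sum>Y\<in>Pow {0..<N}. layer_step N w (F s) (layer s) Y * g Y)"
    and F_bounds: "\<And>s k. k < N \<Longrightarrow> 1/2 \<le> F s k \<and> F s k \<le> 3/2"
    and "s \<in> states N"
  shows "(\<Sum>t\<in>mixed_states N layer. Kp n s t) \<le> (1 - progress_bound N w ^ N) ^ (n div N)"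
proof -
  interpret rw: random_walk N w by fact
  have filter: "(\<Sum>t\<in>{t\<in>states N. P (layer t)}. K s t) =
      (\<Sum>Y\<in>Pow {0..<N}. layer_step N w (F s) (layer s) Y * ind (P Y))" if "s \<in> states N" for s P
    using marginal[OF that, of "\<lambda>Y. ind (P Y)"] by (simp add: sum_filter_eq_sum_ind finite_states)
  interpret absorbing_count N w1 w2 b c r \<delta> "\<lambda>t. card (layer t)" "progress_bound N w" N
  proof
    fix s assume s: "s \<in> states N"
    note range = card_subset_range[OF layer_states[OF s]]
    show "card (layer s) \<le> N" by (fact range(1))
    assume "card (layer s) = 0 \<or> card (layer s) = N"
    then have mono: "layer s = {} \<or> layer s = {0..<N}" using range by blast
    have "{t\<in>states N. card (layer t) = card (layer s)} = {t\<in>states N. layer t = layer s}"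
      using mono card_subset_range[OF layer_states] by auto
    then show "(\<Sum>t\<in>{t\<in>states N. card (layer t) = card (layer s)}. K s t) = 1"
      using filter[OF s, of "\<lambda>Y. Y = layer s"] rw.layer_step_monomorphic[OF F_bounds mono] by simp
  next
    fix s assume s: "s \<in> states N" and "0 < card (layer s)" "card (layer s) < N"
    then have "layer s \<noteq> {}" "layer s \<noteq> {0..<N}"
      using card_subset_range[OF layer_states[OF s]] by auto
    then show "progress_bound N w \<le> (\<Sum>t\<in>{t\<in>states N. card (layer t) = Suc (card (layer s))}. K s t)"
      using filter[OF s, of "\<lambda>Y. card Y = Suc (card (layer s))"]
        rw.layer_step_progress[OF F_bounds layer_states[OF s]] by simp
  qed (use rw.progress_bound_pos rw.progress_bound_le_1 rw.N_pos in auto)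
  show ?thesis
    using mid_states_mass_bound[OF \<open>s \<in> states N\<close>] by (simp add: mixed_states_def)
qed

end

section \<open>Weak selection\<close>

locale two_layer =
  fixes N :: nat and w1 w2 :: "nat \<Rightarrow> nat \<Rightarrow> real" and b c r :: real
  assumes N_ge_2: "2 \<le> N" and graph1: "weighted_graph N w1" and graph2: "weighted_graph N w2"
begin

lemma N_pos: "0 < N"
  using N_ge_2 by simp

sublocale L1: random_walk N w1
  using graph1 N_pos by unfold_locales

sublocale L2: random_walk N w2
  using graph2 N_pos by unfold_locales

abbreviation "p1 \<equiv> trans_prob N w1"
abbreviation "p2 \<equiv> trans_prob N w2"
abbreviation "\<pi>1 \<equiv> stat_dist N w1"
abbreviation "K \<delta> \<equiv> kernel N w1 w2 b c r \<delta>"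
abbreviation "Kp \<delta> \<equiv> kernel_pow N w1 w2 b c r \<delta>"
abbreviation "F \<delta> s \<equiv> fecundity N w1 b c r \<delta> (fst s) (snd s)"
abbreviation "u s \<equiv> payoff N w1 b c r (fst s) (snd s)"

definition payoff_bound :: real where
  "payoff_bound = \<bar>c\<bar> + \<bar>b\<bar> * (\<Sum>i<N. \<Sum>j<N. w1 i j / strength N w1 j) + \<bar>r - 1\<bar> + 1"

definition delta_max :: real where
  "delta_max = 1 / (2 * payoff_bound)"

lemma benefit_weights_nonneg: "i < N \<Longrightarrow> j < N \<Longrightarrow> 0 \<le> w1 i j / strength N w1 j"
  using L1.weight_nonneg L1.strength_pos by (simp add: less_imp_le)

lemma payoff_bound_ge_1: "1 \<le> payoff_bound"
proof -
  have "0 \<le> (\<Sum>i<N. \<Sum>j<N. w1 i j / strength N w1 j)"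
    by (intro sum_nonneg) (simp add: benefit_weights_nonneg)
  then show ?thesis unfolding payoff_bound_def by (simp add: add_increasing)
qed

lemma delta_max_pos: "0 < delta_max"
  using payoff_bound_ge_1 by (simp add: delta_max_def)

lemma abs_payoff_le:
  assumes "i < N"
  shows "\<bar>payoff N w1 b c r X1 X2 i\<bar> \<le> payoff_bound"
proof -
  have "\<bar>\<Sum>j<N. b * (w1 i j / strength N w1 j) * ind (j \<in> X1)\<bar> \<le> (\<Sum>j<N. \<bar>b\<bar> * (w1 i j / strength N w1 j))"
  proof (intro order.trans[OF sum_abs] sum_mono)
    have "\<bar>b * x * ind P\<bar> \<le> \<bar>b\<bar> * x" if "0 \<le> x" for x P
      using that by (cases P) (simp_all add: abs_mult)
    then show "\<bar>b * (w1 i j / strength N w1 j) * ind (j \<in> X1)\<bar> \<le> \<bar>b\<bar> * (w1 i j / strength N w1 j)"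
      if "j \<in> {..<N}" for j
      using benefit_weights_nonneg[OF assms] that by blast
  qed
  also have "\<dots> \<le> \<bar>b\<bar> * (\<Sum>i<N. \<Sum>j<N. w1 i j / strength N w1 j)"
    unfolding sum_distrib_left[symmetric] using assms benefit_weights_nonneg
    by (intro mult_left_mono member_le_sum[of i] sum_nonneg) auto
  finally show ?thesis
    unfolding payoff_def payoff_bound_def by (simp add: ind_def abs_mult) linarith
qed

lemma fecundity_bounds:
  assumes "\<delta> \<in> {0..delta_max}" "k < N"
  shows "1/2 \<le> fecundity N w1 b c r \<delta> X1 X2 k \<and> fecundity N w1 b c r \<delta> X1 X2 k \<le> 3/2"
proof -
  have "\<bar>\<delta> * payoff N w1 b c r X1 X2 k\<bar> \<le> delta_max * payoff_bound"
    unfolding abs_mult using assms abs_payoff_le[OF assms(2)] payoff_bound_ge_1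
    by (intro mult_mono) auto
  also have "\<dots> = 1/2" using payoff_bound_ge_1 by (simp add: delta_max_def)
  finally show ?thesis unfolding fecundity_def by linarith
qed

lemma fecundity_neutral: "fecundity N w1 b c r 0 X1 X2 = (\<lambda>_. 1)"
  by (simp add: fecundity_def fun_eq_iff)

lemma kernel_product:
  assumes "s \<in> states N"
  shows "(\<Sum>t\<in>states N. K \<delta> s t * (h1 (fst t) * h2 (snd t))) =
    (\<Sum>Y\<in>Pow {0..<N}. layer_step N w1 (F \<delta> s) (fst s) Y * h1 Y) *
    (\<Sum>Y\<in>Pow {0..<N}. layer_step N w2 (F \<delta> s) (snd s) Y * h2 Y)"
proof -
  have "(\<Sum>t\<in>states N. K \<delta> s t * (h1 (fst t) * h2 (snd t))) =
      (\<Sum>(Y1, Y2)\<in>Pow {0..<N} \<times> Pow {0..<N}. (layer_step N w1 (F \<delta> s) (fst s) Y1 * h1 Y1) *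
          (layer_step N w2 (F \<delta> s) (snd s) Y2 * h2 Y2))"
    unfolding states_def kernel_def Let_def by (intro sum.cong) (auto simp: ac_simps)
  then show ?thesis
    by (simp add: sum.cartesian_product[symmetric] sum_product[symmetric])
qed

lemma kernel_fst_marginal:
  assumes "\<delta> \<in> {0..delta_max}" "s \<in> states N"
  shows "(\<Sum>t\<in>states N. K \<delta> s t * g (fst t)) =
    (\<Sum>Y\<in>Pow {0..<N}. layer_step N w1 (F \<delta> s) (fst s) Y * g Y)"
  using kernel_product[OF assms(2), of \<delta> g "\<lambda>_. 1"] assms
    L2.layer_step_row_sum[of "F \<delta> s", OF fecundity_bounds] by (simp add: mem_states_iff)

lemma kernel_snd_marginal:
  assumes "\<delta> \<in> {0..delta_max}" "s \<in> states N"
  shows "(\<Sum>t\<in>states N. K \<delta> s t * g (snd t)) =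
    (\<Sum>Y\<in>Pow {0..<N}. layer_step N w2 (F \<delta> s) (snd s) Y * g Y)"
  using kernel_product[OF assms(2), of \<delta> "\<lambda>_. 1" g] assms
    L1.layer_step_row_sum[of "F \<delta> s", OF fecundity_bounds] by (simp add: mem_states_iff)

lemma markov_kernel: "\<delta> \<in> {0..delta_max} \<Longrightarrow> markov_kernel N w1 w2 b c r \<delta>"
  using L1.layer_step_nonneg[of "F \<delta> _", OF fecundity_bounds]
    L2.layer_step_nonneg[of "F \<delta> _", OF fecundity_bounds]
    kernel_fst_marginal[of \<delta> _ "\<lambda>_. 1"] L1.layer_step_row_sum[of "F \<delta> _", OF fecundity_bounds]
  by unfold_locales (auto simp: kernel_def Let_def mem_states_iff)

lemma kernel_pow_nonneg: "\<delta> \<in> {0..delta_max} \<Longrightarrow> s \<in> states N \<Longrightarrow> t \<in> states N \<Longrightarrow> 0 \<le> Kp \<delta> n s t"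
  using markov_kernel.kernel_pow_nonneg[OF markov_kernel] .

lemma mixed_coop_mass_decay:
  obtains C \<rho> where "0 < \<rho>" "\<rho> < 1"
    "\<And>\<delta> s n. \<delta> \<in> {0..delta_max} \<Longrightarrow> s \<in> states N \<Longrightarrow> (\<Sum>t\<in>mixed_states N fst. Kp \<delta> n s t) \<le> C * \<rho> ^ n"
proof -
  have "0 \<le> 1 - progress_bound N w1 ^ N" "1 - progress_bound N w1 ^ N < 1"
    using L1.progress_bound_pos L1.progress_bound_le_1 N_pos by (auto simp: power_le_one)
  then obtain C \<rho> where "0 < \<rho>" "\<rho> < 1" "\<And>n. (1 - progress_bound N w1 ^ N) ^ (n div N) \<le> C * \<rho> ^ n"
    using power_div_le_geometric N_pos by metis
  moreover have "(\<Sum>t\<in>mixed_states N fst. Kp \<delta> n s t) \<le> (1 - progress_bound N w1 ^ N) ^ (n div N)"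
    if "\<delta> \<in> {0..delta_max}" "s \<in> states N" for \<delta> s n
    using markov_kernel.mixed_layer_mass_bound[OF markov_kernel[OF that(1)] L1.random_walk_axioms,
        of fst "F \<delta>"] kernel_fst_marginal[OF that(1)] fecundity_bounds[OF that(1)] that(2)
    by (simp add: mem_states_iff)
  ultimately show ?thesis using that by (meson order.trans)
qed

lemma mixed_mut_mass_decay_neutral:
  obtains C \<rho> where "0 < \<rho>" "\<rho> < 1"
    "\<And>s n. s \<in> states N \<Longrightarrow> (\<Sum>t\<in>mixed_states N snd. Kp 0 n s t) \<le> C * \<rho> ^ n"
proof -
  have zero: "(0::real) \<in> {0..delta_max}" using delta_max_pos by simp
  have "0 \<le> 1 - progress_bound N w2 ^ N" "1 - progress_bound N w2 ^ N < 1"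
    using L2.progress_bound_pos L2.progress_bound_le_1 N_pos by (auto simp: power_le_one)
  then obtain C \<rho> where "0 < \<rho>" "\<rho> < 1" "\<And>n. (1 - progress_bound N w2 ^ N) ^ (n div N) \<le> C * \<rho> ^ n"
    using power_div_le_geometric N_pos by metis
  moreover have "(\<Sum>t\<in>mixed_states N snd. Kp 0 n s t) \<le> (1 - progress_bound N w2 ^ N) ^ (n div N)"
    if "s \<in> states N" for s n
    using markov_kernel.mixed_layer_mass_bound[OF markov_kernel[OF zero] L2.random_walk_axioms,
        of snd "F 0"] kernel_snd_marginal[OF zero] fecundity_bounds[OF zero] that
    by (simp add: mem_states_iff)
  ultimately show ?thesis using that by (meson order.trans)
qed

end

section \<open>The fixation probability as a drift series\<close>

context two_layer
begin

definition coop_freq :: "nat set \<times> nat set \<Rightarrow> real" where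
  "coop_freq s = avg_state N w1 (fst s)"

definition weighted_payoff :: "nat set \<times> nat set \<Rightarrow> nat \<Rightarrow> real" where
  "weighted_payoff s i = (\<Sum>k<N. w1 i k * u s k)"

definition drift_rate :: "real \<Rightarrow> nat set \<times> nat set \<Rightarrow> real" where
  "drift_rate \<delta> s = (\<Sum>i<N. \<pi>1 i / real N * (\<Sum>j<N. ind (j \<in> fst s) *
      (w1 i j * (u s j * strength N w1 i - weighted_payoff s i) /
        (strength N w1 i * (\<Sum>k<N. w1 i k * F \<delta> s k)))))"

definition drift_series :: "nat set \<times> nat set \<Rightarrow> real \<Rightarrow> nat \<Rightarrow> real" where
  "drift_series \<xi> \<delta> n = (\<Sum>t\<in>states N. Kp \<delta> n \<xi> t * drift_rate \<delta> t)"

lemma choice_prob_minus_trans_prob: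
  assumes "\<delta> \<in> {0..delta_max}" "i < N"
  shows "choice_prob N w1 (F \<delta> s) i j - p1 i j =
    \<delta> * (w1 i j * (u s j * strength N w1 i - weighted_payoff s i) /
        (strength N w1 i * (\<Sum>k<N. w1 i k * F \<delta> s k)))"
proof -
  let ?D = "\<Sum>k<N. w1 i k * F \<delta> s k" and ?s = "strength N w1 i"
  have D: "?D = ?s + \<delta> * weighted_payoff s i"
    by (simp add: fecundity_def weighted_payoff_def strength_def distrib_left sum.distrib
        sum_distrib_left ac_simps)
  have "0 < ?D" using L1.choice_denom_pos[OF fecundity_bounds[OF assms(1)] assms(2)] .
  moreover have "0 < ?s" using L1.strength_pos[OF assms(2)] .
  ultimately have "choice_prob N w1 (F \<delta> s) i j - p1 i j = w1 i j * ((1 + \<delta> * u s j) * ?s - ?D) / (?s * ?D)"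
    by (simp add: choice_prob_def trans_prob_def fecundity_def field_simps)
  also have "(1 + \<delta> * u s j) * ?s - ?D = \<delta> * (u s j * ?s - weighted_payoff s i)"
    unfolding D by (simp add: algebra_simps)
  finally show ?thesis by (simp add: ac_simps)
qed

lemma kernel_coop_freq:
  assumes "\<delta> \<in> {0..delta_max}" "s \<in> states N"
  shows "(\<Sum>t\<in>states N. K \<delta> s t * coop_freq t) = coop_freq s + \<delta> * drift_rate \<delta> s"
proof -
  have "(\<Sum>t\<in>states N. K \<delta> s t * coop_freq t) = coop_freq s + (\<Sum>i<N. \<pi>1 i / real N *
      (\<Sum>j<N. (choice_prob N w1 (F \<delta> s) i j - p1 i j) * ind (j \<in> fst s)))"
    unfolding coop_freq_def kernel_fst_marginal[OF assms]
    using L1.layer_step_avg_state[OF fecundity_bounds[OF assms(1)]] assms(2)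
    by (simp add: mem_states_iff)
  also have "\<dots> = coop_freq s + \<delta> * drift_rate \<delta> s"
    unfolding drift_rate_def sum_distrib_left
    by (intro arg_cong2[where f="(+)"] refl sum.cong)
       (simp add: choice_prob_minus_trans_prob[OF assms(1)] sum_distrib_left ac_simps)
  finally show ?thesis .
qed

lemma drift_rate_monomorphic:
  assumes "t \<in> states N" "t \<notin> mixed_states N fst"
  shows "drift_rate \<delta> t = 0"
proof -
  have "fst t = {} \<or> fst t = {0..<N}"
    using not_mixed_states assms by (auto simp: mem_states_iff)
  moreover have "(\<Sum>j<N. w1 i j * (u t j * strength N w1 i - weighted_payoff t i)) =
      (\<Sum>j<N. w1 i j * u t j) * strength N w1 i - (\<Sum>j<N. w1 i j) * weighted_payoff t i" for i
    by (simp add: right_diff_distrib sum_subtractf sum_distrib_right mult.assoc)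
  then have "(\<Sum>j<N. w1 i j * (u t j * strength N w1 i - weighted_payoff t i)) = 0" for i
    by (simp add: weighted_payoff_def strength_def)
  ultimately show ?thesis
    unfolding drift_rate_def by (auto simp: sum_divide_distrib[symmetric])
qed

lemma coop_freq_bounds: "0 \<le> coop_freq t" "coop_freq t \<le> 1"
  using L1.avg_state_bounds by (auto simp: coop_freq_def)

lemma fixation_indicator_dev_le:
  assumes "t \<in> states N"
  shows "\<bar>ind (fst t = {0..<N}) - coop_freq t\<bar> \<le> 1 * ind (t \<in> mixed_states N fst)"
proof (cases "t \<in> mixed_states N fst")
  case True
  then have "fst t \<noteq> {0..<N}" using N_pos by (auto simp: mixed_states_def)
  then show ?thesis using True coop_freq_bounds[of t] by simp
next
  case False
  then have "fst t = {} \<or> fst t = {0..<N}"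
    using not_mixed_states assms by (auto simp: mem_states_iff)
  then show ?thesis
    using False N_pos L1.avg_state_full by (auto simp: coop_freq_def avg_state_empty)
qed

lemma expected_coop_freq:
  assumes "\<delta> \<in> {0..delta_max}" "\<xi> \<in> states N"
  shows "(\<Sum>t\<in>states N. Kp \<delta> n \<xi> t * coop_freq t) = coop_freq \<xi> + \<delta> * (\<Sum>k<n. drift_series \<xi> \<delta> k)"
proof (induction n)
  case 0
  then show ?case
    using assms(2) by (simp add: if_distrib[where f="\<lambda>x. x * _"] sum.delta finite_states cong: if_cong)
next
  case (Suc n)
  have "(\<Sum>t\<in>states N. Kp \<delta> (Suc n) \<xi> t * coop_freq t) =
      (\<Sum>v\<in>states N. Kp \<delta> n \<xi> v * (\<Sum>t\<in>states N. K \<delta> v t * coop_freq t))"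
    by (simp add: sum_distrib_left sum_distrib_right mult.assoc) (rule sum.swap)
  also have "\<dots> = (\<Sum>v\<in>states N. Kp \<delta> n \<xi> v * coop_freq v + \<delta> * (Kp \<delta> n \<xi> v * drift_rate \<delta> v))"
    using kernel_coop_freq[OF assms(1)] by (intro sum.cong) (auto simp: algebra_simps)
  also have "\<dots> = (\<Sum>v\<in>states N. Kp \<delta> n \<xi> v * coop_freq v) + \<delta> * drift_series \<xi> \<delta> n"
    unfolding drift_series_def by (simp add: sum.distrib sum_distrib_left)
  finally show ?case using Suc by (simp add: algebra_simps)
qed

lemma fecundity_denom_pos:
  assumes "random_walk N w" "\<delta> \<in> {0..delta_max}" "i < N"
  shows "(\<Sum>k<N. w i k * (1 + \<delta> * payoff N w1 b c r X1 X2 k)) \<noteq> 0"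
  using random_walk.choice_denom_pos[OF assms(1) _ assms(3), of "fecundity N w1 b c r \<delta> X1 X2"]
    fecundity_bounds[OF assms(2)] by (simp add: fecundity_def)

lemma layer_step_continuous:
  assumes "random_walk N w"
  shows "continuous_on {0..delta_max} (\<lambda>\<delta>. layer_step N w (fecundity N w1 b c r \<delta> X1 X2) X Y)"
proof -
  have if_cont: "continuous_on A (\<lambda>x. if P then f x else 0)" if "continuous_on A f"
    for A P and f :: "real \<Rightarrow> real"
    using that by (cases P) auto
  show ?thesis
    unfolding layer_step_def fecundity_def
    by (intro continuous_intros if_cont) (auto simp: fecundity_denom_pos[OF assms])
qed

lemma kernel_pow_continuous: "continuous_on {0..delta_max} (\<lambda>\<delta>. Kp \<delta> n s t)"
proof (induction n arbitrary: t)
  case (Suc n)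
  have "continuous_on {0..delta_max} (\<lambda>\<delta>. K \<delta> u t)" for u
    unfolding kernel_def Let_def
    by (intro continuous_intros layer_step_continuous L1.random_walk_axioms L2.random_walk_axioms)
  then show ?case using Suc by (simp only: kernel_pow.simps) (intro continuous_intros)
qed simp

lemma drift_rate_continuous: "continuous_on {0..delta_max} (\<lambda>\<delta>. drift_rate \<delta> t)"
proof -
  have "strength N w1 i \<noteq> 0" if "i < N" for i
    using L1.strength_pos[OF that] by simp
  then show ?thesis
    unfolding drift_rate_def fecundity_def
    by (intro continuous_intros) (auto simp: fecundity_denom_pos[OF L1.random_walk_axioms])
qed

lemma drift_rate_bound:
  obtains B where "0 \<le> B"
    "\<And>\<delta> t. \<delta> \<in> {0..delta_max} \<Longrightarrow> t \<in> states N \<Longrightarrow> \<bar>drift_rate \<delta> t\<bar> \<le> B * ind (t \<in> mixed_states N fst)"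
proof -
  have "\<exists>B. 0 \<le> B \<and> (\<forall>\<delta>\<in>{0..delta_max}. \<bar>drift_rate \<delta> t\<bar> \<le> B)" for t
    using continuous_on_compact_bound[OF compact_Icc drift_rate_continuous[of t]]
    by (metis real_norm_def)
  then obtain Bt where Bt: "\<And>t. 0 \<le> Bt t" "\<And>t \<delta>. \<delta> \<in> {0..delta_max} \<Longrightarrow> \<bar>drift_rate \<delta> t\<bar> \<le> Bt t"
    by metis
  define B where "B = (\<Sum>t\<in>states N. Bt t)"
  have "\<bar>drift_rate \<delta> t\<bar> \<le> B * ind (t \<in> mixed_states N fst)"
    if "\<delta> \<in> {0..delta_max}" "t \<in> states N" for \<delta> t
  proof (cases "t \<in> mixed_states N fst")
    case True
    have "Bt t \<le> B" unfolding B_def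
      by (rule member_le_sum) (use that Bt in \<open>auto simp: finite_states\<close>)
    then show ?thesis using Bt(2)[OF that(1), of t] True by simp
  next
    case False
    then show ?thesis using drift_rate_monomorphic[OF that(2)] by simp
  qed
  moreover have "0 \<le> B" unfolding B_def by (intro sum_nonneg Bt)
  ultimately show ?thesis using that by blast
qed

context
  fixes \<xi> assumes \<xi>: "\<xi> \<in> states N"
begin

lemma drift_series_bound:
  obtains B C \<rho> where "\<rho> < 1"
    "\<And>\<delta> n. \<delta> \<in> {0..delta_max} \<Longrightarrow> \<bar>drift_series \<xi> \<delta> n\<bar> \<le> B * (C * \<rho> ^ n)"
    "summable (\<lambda>n. B * (C * \<rho> ^ n))"
proof -
  obtain C \<rho> where decay: "0 < \<rho>" "\<rho> < 1"
    "\<And>\<delta> n. \<delta> \<in> {0..delta_max} \<Longrightarrow> (\<Sum>t\<in>mixed_states N fst. Kp \<delta> n \<xi> t) \<le> C * \<rho> ^ n"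
    using mixed_coop_mass_decay \<xi> by metis
  obtain B where B: "0 \<le> B"
    "\<And>\<delta> t. \<delta> \<in> {0..delta_max} \<Longrightarrow> t \<in> states N \<Longrightarrow> \<bar>drift_rate \<delta> t\<bar> \<le> B * ind (t \<in> mixed_states N fst)"
    using drift_rate_bound by blast
  have "\<bar>drift_series \<xi> \<delta> n\<bar> \<le> B * (C * \<rho> ^ n)" if "\<delta> \<in> {0..delta_max}" for \<delta> n
    using markov_kernel.kernel_pow_expectation_abs_le[OF markov_kernel[OF that] \<xi>
        mixed_states_subset B(2)[OF that]] decay(3)[OF that, of n] B(1)
    unfolding drift_series_def by (meson mult_left_mono order.trans)
  moreover have "summable (\<lambda>n. B * (C * \<rho> ^ n))"
    using decay by (intro summable_mult summable_geometric) auto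
  ultimately show ?thesis using that decay by blast
qed

lemma drift_series_summable:
  assumes "\<delta> \<in> {0..delta_max}"
  shows "summable (drift_series \<xi> \<delta>)"
proof -
  obtain B C \<rho> where bound: "\<And>n. \<bar>drift_series \<xi> \<delta> n\<bar> \<le> B * (C * \<rho> ^ n)"
    and summable: "summable (\<lambda>n. B * (C * \<rho> ^ n))"
    using drift_series_bound assms by metis
  show ?thesis by (rule summable_comparison_test'[OF summable]) (use bound in simp)
qed

lemma drift_sum_continuous: "continuous_on {0..delta_max} (\<lambda>\<delta>. suminf (drift_series \<xi> \<delta>))"
proof -
  obtain B C \<rho> where bound: "\<And>\<delta> n. \<delta> \<in> {0..delta_max} \<Longrightarrow> \<bar>drift_series \<xi> \<delta> n\<bar> \<le> B * (C * \<rho> ^ n)"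
    and summable: "summable (\<lambda>n. B * (C * \<rho> ^ n))"
    using drift_series_bound by metis
  show ?thesis
  proof (rule uniform_limit_theorem)
    show "\<forall>\<^sub>F n in sequentially. continuous_on {0..delta_max} (\<lambda>\<delta>. \<Sum>k<n. drift_series \<xi> \<delta> k)"
      unfolding drift_series_def
      by (intro always_eventually allI continuous_intros kernel_pow_continuous drift_rate_continuous)
    show "uniform_limit {0..delta_max} (\<lambda>n \<delta>. \<Sum>k<n. drift_series \<xi> \<delta> k) (\<lambda>\<delta>. suminf (drift_series \<xi> \<delta>)) sequentially"
      by (rule Weierstrass_m_test[OF _ summable]) (use bound in simp)
  qed simp
qed

text \<open>The frequency process differs from the fixation indicator only on mixed states, whose
  mass decays geometrically; so both have the same limit.\<close>

lemma fix_prob1_eq_drift_sum: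
  assumes \<delta>: "\<delta> \<in> {0..delta_max}"
  shows "fix_prob1 N w1 w2 b c r \<delta> \<xi> = coop_freq \<xi> + \<delta> * suminf (drift_series \<xi> \<delta>)"
proof -
  let ?fix = "\<lambda>n. \<Sum>t\<in>{t \<in> states N. fst t = {0..<N}}. Kp \<delta> n \<xi> t"
  let ?freq = "\<lambda>n. \<Sum>t\<in>states N. Kp \<delta> n \<xi> t * coop_freq t"
  obtain C \<rho> where decay: "0 < \<rho>" "\<rho> < 1"
    "\<And>n. (\<Sum>t\<in>mixed_states N fst. Kp \<delta> n \<xi> t) \<le> C * \<rho> ^ n"
    using mixed_coop_mass_decay \<xi> \<delta> by metis
  have "?freq \<longlonglongrightarrow> coop_freq \<xi> + \<delta> * suminf (drift_series \<xi> \<delta>)"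
    unfolding expected_coop_freq[OF \<delta> \<xi>]
    by (intro tendsto_intros summable_LIMSEQ drift_series_summable \<delta>)
  moreover have "(\<lambda>n. ?fix n - ?freq n) \<longlonglongrightarrow> 0"
  proof (rule Lim_null_comparison)
    show "\<forall>\<^sub>F n in sequentially. norm (?fix n - ?freq n) \<le> 1 * (C * \<rho> ^ n)"
    proof (intro always_eventually allI)
      fix n
      have "?fix n - ?freq n = (\<Sum>t\<in>states N. Kp \<delta> n \<xi> t * (ind (fst t = {0..<N}) - coop_freq t))"
        by (simp add: sum_filter_eq_sum_ind[OF finite_states] right_diff_distrib sum_subtractf)
      also have "\<bar>\<dots>\<bar> \<le> 1 * (\<Sum>t\<in>mixed_states N fst. Kp \<delta> n \<xi> t)"
        by (rule markov_kernel.kernel_pow_expectation_abs_le[OF markov_kernel[OF \<delta>] \<xi>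
            mixed_states_subset fixation_indicator_dev_le])
      finally show "norm (?fix n - ?freq n) \<le> 1 * (C * \<rho> ^ n)"
        using decay(3)[of n] by simp
    qed
    show "(\<lambda>n. 1 * (C * \<rho> ^ n)) \<longlonglongrightarrow> 0"
      using decay by (intro tendsto_mult_right_zero LIMSEQ_power_zero) auto
  qed
  ultimately have "?fix \<longlonglongrightarrow> coop_freq \<xi> + \<delta> * suminf (drift_series \<xi> \<delta>)"
    using tendsto_add[of "\<lambda>n. ?fix n - ?freq n" 0 sequentially ?freq] by simp
  then show ?thesis unfolding fix_prob1_def by (rule limI)
qed

lemma fix_prob1_has_derivative:
  "((\<lambda>\<delta>. fix_prob1 N w1 w2 b c r \<delta> \<xi>) has_real_derivative suminf (drift_series \<xi> 0)) (at 0 within {0..})"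
proof -
  have zero: "(0::real) \<in> {0..delta_max}" using delta_max_pos by simp
  have "((\<lambda>\<delta>. suminf (drift_series \<xi> \<delta>)) \<longlongrightarrow> suminf (drift_series \<xi> 0)) (at 0 within {0..delta_max})"
    using drift_sum_continuous zero by (simp add: continuous_on_def)
  then have "((\<lambda>\<delta>. suminf (drift_series \<xi> \<delta>)) \<longlongrightarrow> suminf (drift_series \<xi> 0)) (at 0 within {0..})"
    using delta_max_pos by (simp add: at_within_Icc_at_right at_within_Ici_at_right)
  moreover have "\<forall>\<^sub>F \<delta> in at 0 within {0..}. suminf (drift_series \<xi> \<delta>) =
      (fix_prob1 N w1 w2 b c r \<delta> \<xi> - fix_prob1 N w1 w2 b c r 0 \<xi>) / (\<delta> - 0)"
    unfolding at_within_Ici_at_right eventually_at_right_field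
    using delta_max_pos fix_prob1_eq_drift_sum zero by (intro exI[of _ delta_max]) auto
  ultimately show ?thesis
    unfolding has_field_derivative_iff using tendsto_cong by fastforce
qed

end

end

section \<open>Neutral pair correlations\<close>

text \<open>Summing a recurrence d (n + 1) = L (d n) over all n gives T - d 0 = L T for the total T.\<close>

lemma sums_Suc_shift: "(f :: nat \<Rightarrow> real) sums s \<Longrightarrow> (\<lambda>n. f (Suc n)) sums (s - f 0)"
  using sums_Suc_iff[of f "s - f 0"] by simp

context two_layer
begin

definition mut_freq :: "nat set \<times> nat set \<Rightarrow> real" where
  "mut_freq s = avg_state N w2 (snd s)"

definition neutral_exp :: "nat set \<times> nat set \<Rightarrow> nat \<Rightarrow> (nat set \<times> nat set \<Rightarrow> real) \<Rightarrow> real" where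
  "neutral_exp \<xi> n h = (\<Sum>t\<in>states N. Kp 0 n \<xi> t * h t)"

definition coop_pair :: "nat \<Rightarrow> nat \<Rightarrow> nat set \<times> nat set \<Rightarrow> real" where
  "coop_pair a e t = ind (a \<in> fst t) * ind (e \<in> fst t)"

definition cross_pair :: "nat \<Rightarrow> nat \<Rightarrow> nat set \<times> nat set \<Rightarrow> real" where
  "cross_pair a e t = ind (a \<in> fst t) * ind (e \<in> snd t)"

definition coop_pair_dev :: "nat set \<times> nat set \<Rightarrow> nat \<Rightarrow> nat \<Rightarrow> nat \<Rightarrow> real" where
  "coop_pair_dev \<xi> a e n = neutral_exp \<xi> n (\<lambda>t. coop_pair a e t - coop_freq t)"

definition cross_pair_dev :: "nat set \<times> nat set \<Rightarrow> nat \<Rightarrow> nat \<Rightarrow> nat \<Rightarrow> real" where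
  "cross_pair_dev \<xi> a e n = neutral_exp \<xi> n (\<lambda>t. cross_pair a e t - coop_freq t * mut_freq t)"

definition coop_pair_total :: "nat set \<times> nat set \<Rightarrow> nat \<Rightarrow> nat \<Rightarrow> real" where
  "coop_pair_total \<xi> a e = suminf (coop_pair_dev \<xi> a e)"

definition cross_pair_total :: "nat set \<times> nat set \<Rightarrow> nat \<Rightarrow> nat \<Rightarrow> real" where
  "cross_pair_total \<xi> a e = suminf (cross_pair_dev \<xi> a e)"

lemma kernel_neutral_product:
  assumes "s \<in> states N"
  shows "(\<Sum>t\<in>states N. K 0 s t * (h1 (fst t) * h2 (snd t))) =
    neutral_step N w1 h1 (fst s) * neutral_step N w2 h2 (snd s)"
  using assms unfolding kernel_product[OF assms] fecundity_neutral mem_states_iff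
  by (simp add: L1.layer_step_neutral_expectation L2.layer_step_neutral_expectation)

lemma kernel_neutral_fst:
  "s \<in> states N \<Longrightarrow> (\<Sum>t\<in>states N. K 0 s t * h (fst t)) = neutral_step N w1 h (fst s)"
  using kernel_neutral_product[of s h "\<lambda>_. 1"] L2.neutral_step_const by simp

lemma kernel_neutral_coop_freq:
  "s \<in> states N \<Longrightarrow> (\<Sum>t\<in>states N. K 0 s t * coop_freq t) = coop_freq s"
  unfolding coop_freq_def using kernel_neutral_fst L1.neutral_step_avg_state
  by (simp add: mem_states_iff)

lemma kernel_neutral_freq_product:
  "s \<in> states N \<Longrightarrow> (\<Sum>t\<in>states N. K 0 s t * (coop_freq t * mut_freq t)) = coop_freq s * mut_freq s"
  unfolding coop_freq_def mut_freq_def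
  using kernel_neutral_product L1.neutral_step_avg_state L2.neutral_step_avg_state
  by (simp add: mem_states_iff)

lemma neutral_exp_Suc:
  "neutral_exp \<xi> (Suc n) h = neutral_exp \<xi> n (\<lambda>s. \<Sum>t\<in>states N. K 0 s t * h t)"
  unfolding neutral_exp_def by (simp add: sum_distrib_left sum_distrib_right mult.assoc) (rule sum.swap)

lemma neutral_exp_cong: "(\<And>t. t \<in> states N \<Longrightarrow> h t = h' t) \<Longrightarrow> neutral_exp \<xi> n h = neutral_exp \<xi> n h'"
  unfolding neutral_exp_def by (intro sum.cong) auto

lemma neutral_exp_0: "\<xi> \<in> states N \<Longrightarrow> neutral_exp \<xi> 0 h = h \<xi>"
  unfolding neutral_exp_def by (simp add: if_distrib[where f="\<lambda>x. x * _"] sum.delta finite_states cong: if_cong)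

lemma neutral_exp_add: "neutral_exp \<xi> n (\<lambda>t. f t + g t) = neutral_exp \<xi> n f + neutral_exp \<xi> n g"
  unfolding neutral_exp_def by (simp add: distrib_left sum.distrib)

lemma neutral_exp_diff: "neutral_exp \<xi> n (\<lambda>t. f t - g t) = neutral_exp \<xi> n f - neutral_exp \<xi> n g"
  unfolding neutral_exp_def by (simp add: right_diff_distrib sum_subtractf)

lemma neutral_exp_cmult: "neutral_exp \<xi> n (\<lambda>t. a * f t) = a * neutral_exp \<xi> n f"
  unfolding neutral_exp_def by (simp add: sum_distrib_left ac_simps)

lemma neutral_exp_sum: "neutral_exp \<xi> n (\<lambda>t. \<Sum>k\<in>A. G k t) = (\<Sum>k\<in>A. neutral_exp \<xi> n (G k))"
  unfolding neutral_exp_def by (simp add: sum_distrib_left) (rule sum.swap)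

lemmas neutral_exp_linear = neutral_exp_add neutral_exp_diff neutral_exp_cmult neutral_exp_sum

lemma kernel_neutral_coop_pair_diag:
  assumes s: "s \<in> states N" and a: "a < N"
  shows "(\<Sum>t\<in>states N. K 0 s t * (coop_pair a a t - coop_freq t)) =
    (1 - 1 / real N) * (coop_pair a a s - coop_freq s) + 1 / real N * (\<Sum>k<N. p1 a k * (coop_pair k k s - coop_freq s))"
proof -
  have "(\<Sum>t\<in>states N. K 0 s t * (coop_pair a a t - coop_freq t)) =
      neutral_step N w1 (\<lambda>Y. ind (a \<in> Y)) (fst s) - coop_freq s"
    using kernel_neutral_fst[OF s, of "\<lambda>Y. ind (a \<in> Y)"] kernel_neutral_coop_freq[OF s]
    by (simp add: coop_pair_def right_diff_distrib sum_subtractf)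
  then show ?thesis
    unfolding L1.neutral_step_indicator[OF a] L1.trans_prob_sum_minus_const[OF a]
    by (simp add: coop_pair_def algebra_simps)
qed

lemma kernel_neutral_coop_pair_off:
  assumes s: "s \<in> states N" and a: "a < N" and e: "e < N" and "a \<noteq> e"
  shows "(\<Sum>t\<in>states N. K 0 s t * (coop_pair a e t - coop_freq t)) =
    (1 - 2 / real N) * (coop_pair a e s - coop_freq s) + 1 / real N * (\<Sum>k<N. p1 a k * (coop_pair k e s - coop_freq s))
      + 1 / real N * (\<Sum>k<N. p1 e k * (coop_pair a k s - coop_freq s))"
proof -
  have "(\<Sum>t\<in>states N. K 0 s t * (coop_pair a e t - coop_freq t)) =
      neutral_step N w1 (\<lambda>Y. ind (a \<in> Y) * ind (e \<in> Y)) (fst s) - coop_freq s"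
    using kernel_neutral_fst[OF s, of "\<lambda>Y. ind (a \<in> Y) * ind (e \<in> Y)"] kernel_neutral_coop_freq[OF s]
    by (simp add: coop_pair_def right_diff_distrib sum_subtractf)
  then show ?thesis
    unfolding L1.neutral_step_indicator_pair[OF a e \<open>a \<noteq> e\<close>]
      L1.trans_prob_sum_minus_const[OF a] L1.trans_prob_sum_minus_const[OF e]
    by (simp add: coop_pair_def algebra_simps)
qed

lemma kernel_neutral_cross_pair:
  assumes s: "s \<in> states N" and a: "a < N" and e: "e < N"
  shows "(\<Sum>t\<in>states N. K 0 s t * (cross_pair a e t - coop_freq t * mut_freq t)) =
    (1 - 1 / real N)^2 * (cross_pair a e s - coop_freq s * mut_freq s)
    + (1 - 1 / real N) * (1 / real N) * (\<Sum>l<N. p2 e l * (cross_pair a l s - coop_freq s * mut_freq s))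
    + (1 / real N) * (1 - 1 / real N) * (\<Sum>k<N. p1 a k * (cross_pair k e s - coop_freq s * mut_freq s))
    + (1 / real N)^2 * (\<Sum>k<N. p1 a k * (\<Sum>l<N. p2 e l * (cross_pair k l s - coop_freq s * mut_freq s)))"
proof -
  let ?\<Phi> = "coop_freq s * mut_freq s"
  let ?A = "\<Sum>k<N. p1 a k * ind (k \<in> fst s)" and ?B = "\<Sum>l<N. p2 e l * ind (l \<in> snd s)"
  have lhs: "(\<Sum>t\<in>states N. K 0 s t * (cross_pair a e t - coop_freq t * mut_freq t)) =
      ((1 - 1 / real N) * ind (a \<in> fst s) + 1 / real N * ?A)
      * ((1 - 1 / real N) * ind (e \<in> snd s) + 1 / real N * ?B) - ?\<Phi>"
    using kernel_neutral_product[OF s, of "\<lambda>X. ind (a \<in> X)" "\<lambda>X. ind (e \<in> X)"]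
      kernel_neutral_freq_product[OF s] L1.neutral_step_indicator[OF a] L2.neutral_step_indicator[OF e]
    by (simp add: cross_pair_def right_diff_distrib sum_subtractf)
  have inner: "(\<Sum>l<N. p2 e l * (cross_pair k l s - ?\<Phi>)) = ind (k \<in> fst s) * ?B - ?\<Phi>" for k
    using L2.trans_prob_sum_minus_const[OF e, of "\<lambda>l. cross_pair k l s" ?\<Phi>]
    by (simp add: cross_pair_def sum_distrib_left ac_simps)
  have pull: "(\<Sum>k<N. p1 a k * (ind (k \<in> fst s) * y)) = ?A * y" for y
    by (simp add: sum_distrib_right mult.assoc)
  have r2: "(\<Sum>k<N. p1 a k * (cross_pair k e s - ?\<Phi>)) = ?A * ind (e \<in> snd s) - ?\<Phi>"
    using L1.trans_prob_sum_minus_const[OF a, of "\<lambda>k. cross_pair k e s" ?\<Phi>]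
    by (simp only: cross_pair_def pull)
  have r3: "(\<Sum>k<N. p1 a k * (\<Sum>l<N. p2 e l * (cross_pair k l s - ?\<Phi>))) = ?A * ?B - ?\<Phi>"
    unfolding inner using L1.trans_prob_sum_minus_const[OF a, of "\<lambda>k. ind (k \<in> fst s) * ?B" ?\<Phi>]
    by (simp only: pull)
  show ?thesis
    unfolding lhs r3 unfolding r2 inner by (simp add: cross_pair_def algebra_simps power2_eq_square)
qed

lemma coop_pair_dev_Suc_diag:
  assumes "a < N"
  shows "coop_pair_dev \<xi> a a (Suc n) =
    (1 - 1 / real N) * coop_pair_dev \<xi> a a n + 1 / real N * (\<Sum>k<N. p1 a k * coop_pair_dev \<xi> k k n)"
proof -
  have "coop_pair_dev \<xi> a a (Suc n) = neutral_exp \<xi> n (\<lambda>s. (1 - 1 / real N) * (coop_pair a a s - coop_freq s)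
      + 1 / real N * (\<Sum>k<N. p1 a k * (coop_pair k k s - coop_freq s)))"
    unfolding coop_pair_dev_def neutral_exp_Suc
    by (rule neutral_exp_cong) (simp add: kernel_neutral_coop_pair_diag assms)
  then show ?thesis unfolding neutral_exp_linear coop_pair_dev_def .
qed

lemma coop_pair_dev_Suc_off:
  assumes "a < N" "e < N" "a \<noteq> e"
  shows "coop_pair_dev \<xi> a e (Suc n) = (1 - 2 / real N) * coop_pair_dev \<xi> a e n
    + 1 / real N * (\<Sum>k<N. p1 a k * coop_pair_dev \<xi> k e n) + 1 / real N * (\<Sum>k<N. p1 e k * coop_pair_dev \<xi> a k n)"
proof -
  have "coop_pair_dev \<xi> a e (Suc n) = neutral_exp \<xi> n (\<lambda>s. (1 - 2 / real N) * (coop_pair a e s - coop_freq s)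
      + 1 / real N * (\<Sum>k<N. p1 a k * (coop_pair k e s - coop_freq s))
      + 1 / real N * (\<Sum>k<N. p1 e k * (coop_pair a k s - coop_freq s)))"
    unfolding coop_pair_dev_def neutral_exp_Suc
    by (rule neutral_exp_cong) (simp add: kernel_neutral_coop_pair_off assms)
  then show ?thesis unfolding neutral_exp_linear coop_pair_dev_def .
qed

lemma cross_pair_dev_Suc:
  assumes "a < N" "e < N"
  shows "cross_pair_dev \<xi> a e (Suc n) =
    (1 - 1 / real N)^2 * cross_pair_dev \<xi> a e n
    + (1 - 1 / real N) * (1 / real N) * (\<Sum>l<N. p2 e l * cross_pair_dev \<xi> a l n)
    + (1 / real N) * (1 - 1 / real N) * (\<Sum>k<N. p1 a k * cross_pair_dev \<xi> k e n)
    + (1 / real N)^2 * (\<Sum>k<N. p1 a k * (\<Sum>l<N. p2 e l * cross_pair_dev \<xi> k l n))"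
proof -
  let ?d = "\<lambda>a e s. cross_pair a e s - coop_freq s * mut_freq s"
  have "cross_pair_dev \<xi> a e (Suc n) = neutral_exp \<xi> n (\<lambda>s. (1 - 1 / real N)^2 * ?d a e s
      + (1 - 1 / real N) * (1 / real N) * (\<Sum>l<N. p2 e l * ?d a l s)
      + (1 / real N) * (1 - 1 / real N) * (\<Sum>k<N. p1 a k * ?d k e s)
      + (1 / real N)^2 * (\<Sum>k<N. p1 a k * (\<Sum>l<N. p2 e l * ?d k l s)))"
    unfolding cross_pair_dev_def neutral_exp_Suc
    by (rule neutral_exp_cong) (simp add: kernel_neutral_cross_pair assms)
  then show ?thesis unfolding neutral_exp_linear cross_pair_dev_def .
qed

lemma neutral_mixed_mass_decay:
  obtains C \<rho> where "0 < \<rho>" "\<rho> < 1" "\<And>s n. s \<in> states N \<Longrightarrow>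
    (\<Sum>t\<in>mixed_states N fst. Kp 0 n s t) + (\<Sum>t\<in>mixed_states N snd. Kp 0 n s t) \<le> C * \<rho> ^ n"
proof -
  have zero: "(0::real) \<in> {0..delta_max}" using delta_max_pos by simp
  obtain C1 \<rho>1 where C1: "0 < \<rho>1" "\<rho>1 < 1"
    "\<And>s n. s \<in> states N \<Longrightarrow> (\<Sum>t\<in>mixed_states N fst. Kp 0 n s t) \<le> C1 * \<rho>1 ^ n"
    using mixed_coop_mass_decay zero by metis
  obtain C2 \<rho>2 where C2: "0 < \<rho>2" "\<rho>2 < 1"
    "\<And>s n. s \<in> states N \<Longrightarrow> (\<Sum>t\<in>mixed_states N snd. Kp 0 n s t) \<le> C2 * \<rho>2 ^ n"
    using mixed_mut_mass_decay_neutral by metis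
  have bound: "C1 * \<rho>1 ^ n + C2 * \<rho>2 ^ n \<le> (\<bar>C1\<bar> + \<bar>C2\<bar>) * max \<rho>1 \<rho>2 ^ n" for n
    unfolding distrib_right using C1(1) C2(1) by (intro add_mono mult_mono power_mono) auto
  show ?thesis
  proof (rule that)
    show "0 < max \<rho>1 \<rho>2" "max \<rho>1 \<rho>2 < 1" using C1 C2 by auto
    show "(\<Sum>t\<in>mixed_states N fst. Kp 0 n s t) + (\<Sum>t\<in>mixed_states N snd. Kp 0 n s t)
        \<le> (\<bar>C1\<bar> + \<bar>C2\<bar>) * max \<rho>1 \<rho>2 ^ n" if "s \<in> states N" for s n
      using C1(3)[OF that, of n] C2(3)[OF that, of n] bound[of n] by linarith
  qed
qed

lemma freq_bounds: "0 \<le> coop_freq t" "coop_freq t \<le> 1" "0 \<le> mut_freq t" "mut_freq t \<le> 1"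
  using coop_freq_bounds L2.avg_state_bounds by (auto simp: mut_freq_def)

lemma coop_pair_dev_abs_le:
  assumes \<xi>: "\<xi> \<in> states N" and "a < N" "e < N"
  shows "\<bar>coop_pair_dev \<xi> a e n\<bar> \<le> (\<Sum>t\<in>mixed_states N fst. Kp 0 n \<xi> t)"
proof -
  have zero: "(0::real) \<in> {0..delta_max}" using delta_max_pos by simp
  have "\<bar>coop_pair a e t - coop_freq t\<bar> \<le> 1 * ind (t \<in> mixed_states N fst)" if "t \<in> states N" for t
    using not_mixed_states[of t N fst] that freq_bounds[of t] assms(2,3) L1.avg_state_full
    by (cases "t \<in> mixed_states N fst") (auto simp: coop_pair_def coop_freq_def avg_state_empty mem_states_iff ind_def)
  then have "\<bar>coop_pair_dev \<xi> a e n\<bar> \<le> 1 * (\<Sum>t\<in>mixed_states N fst. Kp 0 n \<xi> t)"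
    unfolding coop_pair_dev_def neutral_exp_def
    by (rule markov_kernel.kernel_pow_expectation_abs_le[OF markov_kernel[OF zero] \<xi> mixed_states_subset])
  then show ?thesis by simp
qed

lemma cross_pair_dev_abs_le:
  assumes \<xi>: "\<xi> \<in> states N" and "a < N" "e < N"
  shows "\<bar>cross_pair_dev \<xi> a e n\<bar> \<le> (\<Sum>t\<in>mixed_states N fst. Kp 0 n \<xi> t) + (\<Sum>t\<in>mixed_states N snd. Kp 0 n \<xi> t)"
proof -
  have zero: "(0::real) \<in> {0..delta_max}" using delta_max_pos by simp
  let ?M = "mixed_states N fst \<union> mixed_states N snd"
  have "\<bar>cross_pair a e t - coop_freq t * mut_freq t\<bar> \<le> 1 * ind (t \<in> ?M)" if "t \<in> states N" for t
  proof (cases "t \<in> ?M")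
    case True
    then show ?thesis using freq_bounds[of t] mult_le_one[of "coop_freq t" "mut_freq t"]
      by (auto simp: cross_pair_def ind_def)
  next
    case False
    then show ?thesis
      using not_mixed_states[of t N fst] not_mixed_states[of t N snd] that assms(2,3)
        L1.avg_state_full L2.avg_state_full
      by (auto simp: cross_pair_def coop_freq_def mut_freq_def avg_state_empty mem_states_iff)
  qed
  then have "\<bar>cross_pair_dev \<xi> a e n\<bar> \<le> 1 * (\<Sum>t\<in>?M. Kp 0 n \<xi> t)"
    unfolding cross_pair_dev_def neutral_exp_def using mixed_states_subset
    by (intro markov_kernel.kernel_pow_expectation_abs_le[OF markov_kernel[OF zero] \<xi>]) auto
  also have "\<dots> \<le> (\<Sum>t\<in>mixed_states N fst. Kp 0 n \<xi> t) + (\<Sum>t\<in>mixed_states N snd. Kp 0 n \<xi> t)"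
  proof -
    have "finite (mixed_states N fst)" "finite (mixed_states N snd)"
      using finite_subset[OF mixed_states_subset finite_states] by auto
    moreover have "0 \<le> (\<Sum>t\<in>mixed_states N fst \<inter> mixed_states N snd. Kp 0 n \<xi> t)"
      using kernel_pow_nonneg[OF zero \<xi>] mixed_states_subset by (intro sum_nonneg) blast
    ultimately show ?thesis using sum_Un[of "mixed_states N fst" "mixed_states N snd" "Kp 0 n \<xi>"] by simp
  qed
  finally show ?thesis by simp
qed

lemma pair_dev_bound:
  obtains C \<rho> where "0 < \<rho>" "\<rho> < 1" "\<And>\<xi> a e n. \<xi> \<in> states N \<Longrightarrow> a < N \<Longrightarrow> e < N \<Longrightarrow>
     \<bar>coop_pair_dev \<xi> a e n\<bar> \<le> C * \<rho> ^ n \<and> \<bar>cross_pair_dev \<xi> a e n\<bar> \<le> C * \<rho> ^ n"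
proof -
  have zero: "(0::real) \<in> {0..delta_max}" using delta_max_pos by simp
  obtain C \<rho> where decay: "0 < \<rho>" "\<rho> < 1" "\<And>s n. s \<in> states N \<Longrightarrow>
    (\<Sum>t\<in>mixed_states N fst. Kp 0 n s t) + (\<Sum>t\<in>mixed_states N snd. Kp 0 n s t) \<le> C * \<rho> ^ n"
    using neutral_mixed_mass_decay by metis
  show ?thesis
  proof (rule that[OF decay(1,2)])
    fix \<xi> a e n assume pair: "\<xi> \<in> states N" "a < N" "e < N"
    have "0 \<le> (\<Sum>t\<in>mixed_states N snd. Kp 0 n \<xi> t)"
      using kernel_pow_nonneg[OF zero pair(1)] mixed_states_subset by (intro sum_nonneg) blast
    then have "\<bar>coop_pair_dev \<xi> a e n\<bar> \<le> C * \<rho> ^ n"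
      using coop_pair_dev_abs_le[OF pair, of n] decay(3)[OF pair(1), of n] by linarith
    moreover have "\<bar>cross_pair_dev \<xi> a e n\<bar> \<le> C * \<rho> ^ n"
      using cross_pair_dev_abs_le[OF pair, of n] decay(3)[OF pair(1), of n] by linarith
    ultimately show "\<bar>coop_pair_dev \<xi> a e n\<bar> \<le> C * \<rho> ^ n \<and> \<bar>cross_pair_dev \<xi> a e n\<bar> \<le> C * \<rho> ^ n" ..
  qed
qed

context
  fixes \<xi> assumes \<xi>: "\<xi> \<in> states N"
begin

lemma pair_dev_sums:
  assumes "a < N" "e < N"
  shows "coop_pair_dev \<xi> a e sums coop_pair_total \<xi> a e"
    and "cross_pair_dev \<xi> a e sums cross_pair_total \<xi> a e"
proof -
  obtain C \<rho> where "0 < \<rho>" "\<rho> < 1"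
    and bound: "\<And>n. \<bar>coop_pair_dev \<xi> a e n\<bar> \<le> C * \<rho> ^ n \<and> \<bar>cross_pair_dev \<xi> a e n\<bar> \<le> C * \<rho> ^ n"
    using pair_dev_bound \<xi> assms by metis
  then have geometric: "summable (\<lambda>n. C * \<rho> ^ n)" by (intro summable_mult summable_geometric) auto
  show "coop_pair_dev \<xi> a e sums coop_pair_total \<xi> a e"
    unfolding coop_pair_total_def
    by (rule summable_sums, rule summable_comparison_test'[OF geometric]) (use bound in simp)
  show "cross_pair_dev \<xi> a e sums cross_pair_total \<xi> a e"
    unfolding cross_pair_total_def
    by (rule summable_sums, rule summable_comparison_test'[OF geometric]) (use bound in simp)
qed

lemma coop_pair_total_diag:
  assumes a: "a < N"
  shows "coop_pair_total \<xi> a a = real N * (ind (a \<in> fst \<xi>) - avg_state N w1 (fst \<xi>))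
    + (\<Sum>k<N. p1 a k * coop_pair_total \<xi> k k)"
proof -
  let ?T = "coop_pair_total \<xi>"
  have "(\<lambda>n. coop_pair_dev \<xi> a a (Suc n)) sums
      ((1 - 1 / real N) * ?T a a + 1 / real N * (\<Sum>k<N. p1 a k * ?T k k))"
    unfolding coop_pair_dev_Suc_diag[OF a]
    by (intro sums_add sums_mult sums_sum pair_dev_sums a) auto
  moreover have "coop_pair_dev \<xi> a a 0 = ind (a \<in> fst \<xi>) - avg_state N w1 (fst \<xi>)"
    unfolding coop_pair_dev_def neutral_exp_0[OF \<xi>] by (simp add: coop_pair_def coop_freq_def)
  ultimately have "?T a a - (ind (a \<in> fst \<xi>) - avg_state N w1 (fst \<xi>)) =
      (1 - 1 / real N) * ?T a a + 1 / real N * (\<Sum>k<N. p1 a k * ?T k k)"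
    using sums_unique2[OF sums_Suc_shift[OF pair_dev_sums(1)[OF a a]]] by simp
  then show ?thesis using N_pos by (simp add: field_simps)
qed

lemma coop_pair_total_off:
  assumes a: "a < N" and e: "e < N" and "a \<noteq> e"
  shows "coop_pair_total \<xi> a e = real N / 2 * (ind (a \<in> fst \<xi>) * ind (e \<in> fst \<xi>) - avg_state N w1 (fst \<xi>))
     + 1/2 * (\<Sum>k<N. p1 a k * coop_pair_total \<xi> k e) + 1/2 * (\<Sum>k<N. p1 e k * coop_pair_total \<xi> a k)"
proof -
  let ?T = "coop_pair_total \<xi>"
  have "(\<lambda>n. coop_pair_dev \<xi> a e (Suc n)) sums ((1 - 2 / real N) * ?T a e
      + 1 / real N * (\<Sum>k<N. p1 a k * ?T k e) + 1 / real N * (\<Sum>k<N. p1 e k * ?T a k))"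
    unfolding coop_pair_dev_Suc_off[OF a e \<open>a \<noteq> e\<close>]
    by (intro sums_add sums_mult sums_sum pair_dev_sums a e) auto
  moreover have "coop_pair_dev \<xi> a e 0 = ind (a \<in> fst \<xi>) * ind (e \<in> fst \<xi>) - avg_state N w1 (fst \<xi>)"
    unfolding coop_pair_dev_def neutral_exp_0[OF \<xi>] by (simp add: coop_pair_def coop_freq_def)
  ultimately have "?T a e - (ind (a \<in> fst \<xi>) * ind (e \<in> fst \<xi>) - avg_state N w1 (fst \<xi>)) =
      (1 - 2 / real N) * ?T a e + 1 / real N * (\<Sum>k<N. p1 a k * ?T k e) + 1 / real N * (\<Sum>k<N. p1 e k * ?T a k)"
    using sums_unique2[OF sums_Suc_shift[OF pair_dev_sums(1)[OF a e]]] by simp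
  then show ?thesis using N_pos by (simp add: field_simps)
qed

lemma coop_pair_total_normalized: "(\<Sum>a<N. \<pi>1 a * coop_pair_total \<xi> a a) = 0"
proof -
  have "(\<Sum>a<N. \<pi>1 a * (coop_pair a a t - coop_freq t)) = 0" for t
    using L1.stat_dist_sum
    by (simp add: coop_pair_def coop_freq_def avg_state_def right_diff_distrib sum_subtractf
        sum_distrib_right[symmetric])
  then have "(\<Sum>a<N. \<pi>1 a * coop_pair_dev \<xi> a a n) = 0" for n
    unfolding coop_pair_dev_def neutral_exp_linear[symmetric] by (simp add: neutral_exp_def)
  moreover have "(\<lambda>n. \<Sum>a<N. \<pi>1 a * coop_pair_dev \<xi> a a n) sums (\<Sum>a<N. \<pi>1 a * coop_pair_total \<xi> a a)"
    by (intro sums_sum sums_mult pair_dev_sums) auto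
  ultimately show ?thesis using sums_unique2[OF _ sums_zero] by simp
qed

lemma coop_pair_total_beta_system: "beta_system N w1 (fst \<xi>) (coop_pair_total \<xi>)"
  unfolding beta_system_def
  using coop_pair_total_diag coop_pair_total_off coop_pair_total_normalized by blast

lemma cross_pair_total_eq:
  assumes a: "a < N" and e: "e < N"
  shows "cross_pair_total \<xi> a e = (real N)^2 / (2 * real N - 1) *
       (ind (a \<in> fst \<xi>) * ind (e \<in> snd \<xi>) - avg_state N w1 (fst \<xi>) * avg_state N w2 (snd \<xi>))
     + 1 / (2 * real N - 1) * (\<Sum>k<N. p1 a k * (\<Sum>l<N. p2 e l * cross_pair_total \<xi> k l))
     + (real N - 1) / (2 * real N - 1) * ((\<Sum>k<N. p1 a k * cross_pair_total \<xi> k e) + (\<Sum>l<N. p2 e l * cross_pair_total \<xi> a l))"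
proof -
  let ?T = "cross_pair_total \<xi>" and ?N = "real N"
  let ?D = "ind (a \<in> fst \<xi>) * ind (e \<in> snd \<xi>) - avg_state N w1 (fst \<xi>) * avg_state N w2 (snd \<xi>)"
  define S1 where "S1 = (\<Sum>k<N. p1 a k * ?T k e)"
  define S2 where "S2 = (\<Sum>l<N. p2 e l * ?T a l)"
  define S3 where "S3 = (\<Sum>k<N. p1 a k * (\<Sum>l<N. p2 e l * ?T k l))"
  define D where "D = ?D"
  define T where "T = ?T a e"
  have "(\<lambda>n. cross_pair_dev \<xi> a e (Suc n)) sums
      ((1 - 1 / ?N)^2 * T + (1 - 1 / ?N) * (1 / ?N) * S2 + (1 / ?N) * (1 - 1 / ?N) * S1 + (1 / ?N)^2 * S3)"
    unfolding cross_pair_dev_Suc[OF a e] S1_def S2_def S3_def T_def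
    by (intro sums_add sums_mult sums_sum pair_dev_sums a e) auto
  moreover have "cross_pair_dev \<xi> a e 0 = D"
    unfolding cross_pair_dev_def neutral_exp_0[OF \<xi>] D_def by (simp add: cross_pair_def coop_freq_def mut_freq_def)
  ultimately have "T - D =
      (1 - 1 / ?N)^2 * T + (1 - 1 / ?N) * (1 / ?N) * S2 + (1 / ?N) * (1 - 1 / ?N) * S1 + (1 / ?N)^2 * S3"
    using sums_unique2[OF sums_Suc_shift[OF pair_dev_sums(2)[OF a e]]] unfolding T_def by simp
  then have "?N^2 * (T - D) =
      ?N^2 * ((1 - 1 / ?N)^2 * T + (1 - 1 / ?N) * (1 / ?N) * S2 + (1 / ?N) * (1 - 1 / ?N) * S1 + (1 / ?N)^2 * S3)"
    by simp
  also have "\<dots> = (?N - 1)^2 * T + (?N - 1) * S2 + (?N - 1) * S1 + S3"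
    using N_pos by (simp add: field_simps power2_eq_square)
  finally have "?N^2 * (T - D) = (?N - 1)^2 * T + (?N - 1) * S2 + (?N - 1) * S1 + S3" .
  then have "(2 * ?N - 1) * T = ?N^2 * D + S3 + (?N - 1) * (S1 + S2)"
    by (simp add: algebra_simps power2_eq_square)
  moreover have "2 * ?N - 1 \<noteq> 0" using N_ge_2 by simp
  ultimately have "T = (?N^2 * D + S3 + (?N - 1) * (S1 + S2)) / (2 * ?N - 1)"
    by (simp add: eq_divide_eq mult.commute)
  also have "\<dots> = ?N^2 / (2 * ?N - 1) * D + 1 / (2 * ?N - 1) * S3 + (?N - 1) / (2 * ?N - 1) * (S1 + S2)"
    by (simp add: add_divide_distrib)
  finally show ?thesis unfolding T_def D_def S1_def S2_def S3_def .
qed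

end

lemma gamma_weights:
  "0 \<le> 1 / (2 * real N - 1)" "0 < (real N - 1) / (2 * real N - 1)"
  "1 / (2 * real N - 1) + 2 * ((real N - 1) / (2 * real N - 1)) = 1"
  using N_ge_2 by (auto simp: field_simps)

lemma cross_pair_total_gamma_system:
  assumes \<xi>: "\<xi> \<in> states N"
  defines "\<kappa> \<equiv> (\<Sum>a<N. \<pi>1 a * cross_pair_total \<xi> a a)"
  shows "gamma_system N w1 w2 (fst \<xi>) (snd \<xi>) (\<lambda>i j. cross_pair_total \<xi> i j - \<kappa>)"
  unfolding gamma_system_def
proof (intro conjI allI impI)
  fix i j assume ij: "i < N" "j < N"
  let ?T = "cross_pair_total \<xi>"
  have double: "(\<Sum>k1<N. \<Sum>k2<N. p1 i k1 * p2 j k2 * g k1 k2) = (\<Sum>k<N. p1 i k * (\<Sum>l<N. p2 j l * g k l))" for g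
    by (simp add: sum_distrib_left mult.assoc)
  have shift: "f - \<kappa> = X + \<alpha> * (T1 - \<kappa>) + \<beta> * ((T2 - \<kappa>) + (T3 - \<kappa>))"
    if "\<alpha> + 2 * \<beta> = 1" "f = X + \<alpha> * T1 + \<beta> * (T2 + T3)" for f X T1 T2 T3 \<alpha> \<beta> :: real
  proof -
    have "(\<alpha> + 2 * \<beta>) * \<kappa> = \<kappa>" using that(1) by simp
    then show ?thesis using that(2) by (simp add: algebra_simps)
  qed
  have nested: "(\<Sum>k<N. p1 i k * (\<Sum>l<N. p2 j l * (?T k l - \<kappa>))) = (\<Sum>k<N. p1 i k * (\<Sum>l<N. p2 j l * ?T k l)) - \<kappa>"
    unfolding L2.trans_prob_sum_minus_const[OF ij(2)] by (rule L1.trans_prob_sum_minus_const[OF ij(1)])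
  show "?T i j - \<kappa> = (real N)\<^sup>2 / (2 * real N - 1) *
          (ind (i \<in> fst \<xi>) * ind (j \<in> snd \<xi>) - avg_state N w1 (fst \<xi>) * avg_state N w2 (snd \<xi>)) +
        1 / (2 * real N - 1) * (\<Sum>k1<N. \<Sum>k2<N. p1 i k1 * p2 j k2 * (?T k1 k2 - \<kappa>)) +
        (real N - 1) / (2 * real N - 1) *
          ((\<Sum>k<N. p1 i k * (?T k j - \<kappa>)) + (\<Sum>k<N. p2 j k * (?T i k - \<kappa>)))"
    unfolding double nested L1.trans_prob_sum_minus_const[OF ij(1)] L2.trans_prob_sum_minus_const[OF ij(2)]
    by (rule shift[OF gamma_weights(3) cross_pair_total_eq[OF \<xi> ij]])
next
  show "(\<Sum>i<N. \<pi>1 i * (cross_pair_total \<xi> i i - \<kappa>)) = 0"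
    unfolding \<kappa>_def using L1.stat_dist_sum
    by (simp add: right_diff_distrib sum_subtractf sum_distrib_right[symmetric])
qed

end

section \<open>Uniqueness of the gamma system\<close>

lemma weighted_mean_eq_max:
  fixes \<alpha> \<beta> T1 T2 T3 M :: real
  assumes "0 \<le> \<alpha>" "0 < \<beta>" "\<alpha> + 2 * \<beta> = 1" "T1 \<le> M" "T2 \<le> M" "T3 \<le> M"
    and "M = \<alpha> * T1 + \<beta> * T2 + \<beta> * T3"
  shows "T2 = M" "T3 = M"
proof -
  have "\<alpha> * T1 \<le> \<alpha> * M" "\<beta> * T2 \<le> \<beta> * M" "\<beta> * T3 \<le> \<beta> * M"
    using assms by (auto intro: mult_left_mono)
  moreover have "M = \<alpha> * M + \<beta> * M + \<beta> * M"
    using assms(3) by (metis mult_2 distrib_right mult_1 add.assoc)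
  ultimately have "\<beta> * T2 = \<beta> * M" "\<beta> * T3 = \<beta> * M" using assms(7) by linarith+
  then show "T2 = M" "T3 = M" using assms(2) by auto
qed

context two_layer
begin

lemma gamma_homogeneous_nonpos:
  fixes z :: "nat \<Rightarrow> nat \<Rightarrow> real"
  assumes eq: "\<And>i j. i < N \<Longrightarrow> j < N \<Longrightarrow>
      z i j = 1 / (2 * real N - 1) * (\<Sum>k<N. p1 i k * (\<Sum>l<N. p2 j l * z k l))
        + (real N - 1) / (2 * real N - 1) * (\<Sum>k<N. p1 i k * z k j)
        + (real N - 1) / (2 * real N - 1) * (\<Sum>l<N. p2 j l * z i l)"
    and normalized: "(\<Sum>i<N. \<pi>1 i * z i i) = 0"
    and "i < N" "j < N"
  shows "z i j \<le> 0"
proof -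
  obtain i0 j0 where m: "i0 < N" "j0 < N" "\<And>i j. i < N \<Longrightarrow> j < N \<Longrightarrow> z i j \<le> z i0 j0"
    using ex_max_on_square[OF N_pos, of z] by blast
  let ?M = "z i0 j0"
  have avg1: "(\<Sum>k<N. p1 i k * v k) \<le> ?M" if "i < N" "\<And>k. k < N \<Longrightarrow> v k \<le> ?M" for i v
    using L1.trans_prob_nonneg L1.trans_prob_row_sum that by (intro convex_comb_le) auto
  have avg2: "(\<Sum>l<N. p2 j l * v l) \<le> ?M" if "j < N" "\<And>l. l < N \<Longrightarrow> v l \<le> ?M" for j v
    using L2.trans_prob_nonneg L2.trans_prob_row_sum that by (intro convex_comb_le) auto
  have max_split: "(\<Sum>k<N. p1 i k * z k j) = ?M" "(\<Sum>l<N. p2 j l * z i l) = ?M"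
    if "i < N" "j < N" "z i j = ?M" for i j
    using weighted_mean_eq_max[OF gamma_weights avg1[OF that(1) avg2] avg1[OF that(1)] avg2[OF that(2)]
        eq[OF that(1,2), unfolded that(3)]] m that(1,2) by blast+
  have column: "z k j0 = ?M" if "k < N" for k
  proof (rule L1.edge_propagation[of "\<lambda>k. z k j0 = ?M", OF _ m(1) _ that])
    fix k k' assume kk: "k < N" "k' < N" "0 < w1 k k'" "z k j0 = ?M"
    show "z k' j0 = ?M"
      by (rule convex_comb_eq_max[of N "p1 k"])
         (use max_split(1)[OF kk(1) m(2) kk(4)] L1.trans_prob_nonneg L1.trans_prob_row_sum
           L1.trans_prob_pos kk m in auto)
  qed simp
  have all: "z k l = ?M" if "k < N" "l < N" for k l
  proof (rule L2.edge_propagation[of "\<lambda>l. z k l = ?M", OF _ m(2) _ that(2)])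
    fix l l' assume ll: "l < N" "l' < N" "0 < w2 l l'" "z k l = ?M"
    show "z k l' = ?M"
      by (rule convex_comb_eq_max[of N "p2 l"])
         (use max_split(2)[OF that(1) ll(1) ll(4)] L2.trans_prob_nonneg L2.trans_prob_row_sum
           L2.trans_prob_pos ll m that in auto)
  qed (use column that in simp)
  have "(\<Sum>i<N. \<pi>1 i * z i i) = (\<Sum>i<N. \<pi>1 i) * ?M"
    unfolding sum_distrib_right by (rule sum.cong[OF refl]) (metis all lessThan_iff)
  then have "(\<Sum>i<N. \<pi>1 i * z i i) = ?M"
    using L1.stat_dist_sum by simp
  then show ?thesis using normalized m(3)[OF assms(3,4)] by simp
qed

lemma gamma_system_unique:
  assumes "gamma_system N w1 w2 X1 X2 \<gamma>" "gamma_system N w1 w2 X1 X2 \<gamma>'" "i < N" "j < N"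
  shows "\<gamma> i j = \<gamma>' i j"
proof -
  let ?z = "\<lambda>i j. \<gamma> i j - \<gamma>' i j"
  have double: "(\<Sum>k1<N. \<Sum>k2<N. p1 i k1 * p2 j k2 * g k1 k2) = (\<Sum>k<N. p1 i k * (\<Sum>l<N. p2 j l * g k l))"
    for g i j by (simp add: sum_distrib_left mult.assoc)
  have sum_diff: "(\<Sum>k<N. f k * (g k - h k)) = (\<Sum>k<N. f k * g k) - (\<Sum>k<N. f k * h k)"
    for f g h :: "nat \<Rightarrow> real" by (simp add: right_diff_distrib sum_subtractf)
  note eqs = assms(1,2)[unfolded gamma_system_def double]
  have eq: "?z i j = 1 / (2 * real N - 1) * (\<Sum>k<N. p1 i k * (\<Sum>l<N. p2 j l * ?z k l))
      + (real N - 1) / (2 * real N - 1) * (\<Sum>k<N. p1 i k * ?z k j)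
      + (real N - 1) / (2 * real N - 1) * (\<Sum>l<N. p2 j l * ?z i l)" if "i < N" "j < N" for i j
    using eqs(1)[THEN conjunct1, rule_format, OF that] eqs(2)[THEN conjunct1, rule_format, OF that]
    unfolding sum_diff by (simp add: algebra_simps)
  have normalized: "(\<Sum>i<N. \<pi>1 i * ?z i i) = 0"
    using eqs(1)[THEN conjunct2] eqs(2)[THEN conjunct2] unfolding sum_diff by simp
  have "?z i j \<le> 0" by (rule gamma_homogeneous_nonpos[OF eq normalized assms(3,4)])
  moreover have "- ?z i j \<le> 0"
  proof (rule gamma_homogeneous_nonpos[of "\<lambda>i j. - ?z i j", OF _ _ assms(3,4)])
    show "(\<Sum>i<N. \<pi>1 i * - ?z i i) = 0"
      unfolding mult_minus_right sum_negf using normalized by simp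
    show "- ?z i j = 1 / (2 * real N - 1) * (\<Sum>k<N. p1 i k * (\<Sum>l<N. p2 j l * - ?z k l))
        + (real N - 1) / (2 * real N - 1) * (\<Sum>k<N. p1 i k * - ?z k j)
        + (real N - 1) / (2 * real N - 1) * (\<Sum>l<N. p2 j l * - ?z i l)" if "i < N" "j < N" for i j
      unfolding mult_minus_right sum_negf using eq[OF that] by linarith
  qed
  ultimately show ?thesis by simp
qed

end

section \<open>The derivative at neutrality\<close>

context two_layer
begin

abbreviation "P2 \<equiv> mat_pow N p1 2"

lemma two_step_row_sum:
  assumes "j < N"
  shows "(\<Sum>k<N. P2 j k) = 1"
proof -
  have "(\<Sum>k<N. P2 j k) = (\<Sum>i<N. p1 j i * (\<Sum>k<N. p1 i k))"
    unfolding mat_pow_2[OF assms] by (simp add: sum_distrib_left) (rule sum.swap)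
  also have "\<dots> = (\<Sum>i<N. p1 j i)" by (intro sum.cong refl) (simp add: L1.trans_prob_row_sum)
  finally show ?thesis using L1.trans_prob_row_sum[OF assms] by simp
qed

lemma two_step_stationary:
  assumes "k < N"
  shows "(\<Sum>j<N. \<pi>1 j * P2 j k) = \<pi>1 k"
proof -
  have "(\<Sum>j<N. \<pi>1 j * P2 j k) = (\<Sum>j<N. \<pi>1 j * (\<Sum>i<N. p1 j i * p1 i k))"
    by (intro sum.cong refl) (simp add: mat_pow_2)
  then show ?thesis
    using L1.stat_dist_sum_trans_prob[of "\<lambda>i. p1 i k"] L1.stat_dist_stationary[OF assms] by simp
qed

lemma two_step_total: "(\<Sum>j<N. \<Sum>k<N. \<pi>1 j * P2 j k) = 1"
  using L1.stat_dist_sum by (simp add: sum_distrib_left[symmetric] two_step_row_sum)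

lemma two_step_reversible:
  assumes "j < N" "k < N"
  shows "(\<Sum>i<N. \<pi>1 i * p1 i j * p1 i k) = \<pi>1 j * P2 j k"
proof -
  have "(\<Sum>i<N. \<pi>1 i * p1 i j * p1 i k) = (\<Sum>i<N. \<pi>1 j * p1 j i * p1 i k)"
    using L1.stat_dist_reversible assms(1) by (intro sum.cong) auto
  then show ?thesis by (simp add: mat_pow_2[OF assms(1)] sum_distrib_left mult.assoc)
qed

definition selection_form :: "(nat \<Rightarrow> real) \<Rightarrow> (nat \<Rightarrow> real) \<Rightarrow> real" where
  "selection_form X g = (\<Sum>j<N. \<pi>1 j * X j * g j) - (\<Sum>j<N. \<Sum>k<N. \<pi>1 j * P2 j k * X j * g k)"

lemma selection_form_eq:
  "(\<Sum>i<N. \<pi>1 i * (\<Sum>j<N. X j * (p1 i j * (g j - (\<Sum>k<N. p1 i k * g k))))) = selection_form X g"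
proof -
  have "(\<Sum>i<N. \<pi>1 i * (\<Sum>j<N. X j * (p1 i j * (g j - (\<Sum>k<N. p1 i k * g k))))) =
      (\<Sum>i<N. \<Sum>j<N. \<pi>1 i * p1 i j * X j * g j) - (\<Sum>i<N. \<Sum>j<N. \<Sum>k<N. \<pi>1 i * p1 i j * p1 i k * X j * g k)"
    by (simp add: right_diff_distrib sum_subtractf sum_distrib_left ac_simps)
  also have "(\<Sum>i<N. \<Sum>j<N. \<pi>1 i * p1 i j * X j * g j) = (\<Sum>j<N. (\<Sum>i<N. \<pi>1 i * p1 i j) * X j * g j)"
    by (subst sum.swap) (simp add: sum_distrib_right)
  also have "\<dots> = (\<Sum>j<N. \<pi>1 j * X j * g j)"
    by (intro sum.cong refl) (simp add: L1.stat_dist_stationary)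
  also have "(\<Sum>i<N. \<Sum>j<N. \<Sum>k<N. \<pi>1 i * p1 i j * p1 i k * X j * g k) =
      (\<Sum>j<N. \<Sum>k<N. \<Sum>i<N. \<pi>1 i * p1 i j * p1 i k * X j * g k)"
    by (subst sum.swap) (rule sum.cong[OF refl], rule sum.swap)
  also have "\<dots> = (\<Sum>j<N. \<Sum>k<N. \<pi>1 j * P2 j k * X j * g k)"
    by (intro sum.cong refl) (simp add: sum_distrib_right[symmetric] two_step_reversible)
  finally show ?thesis unfolding selection_form_def .
qed

lemma selection_form_add: "selection_form X (\<lambda>k. f k + g k) = selection_form X f + selection_form X g"
  unfolding selection_form_def by (simp add: distrib_left sum.distrib)

lemma selection_form_cmult: "selection_form X (\<lambda>k. a * f k) = a * selection_form X f"
  unfolding selection_form_def by (simp add: right_diff_distrib sum_distrib_left ac_simps)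

lemma selection_form_const_1: "selection_form X (\<lambda>k. 1) = 0"
proof -
  have "(\<Sum>j<N. \<Sum>k<N. \<pi>1 j * P2 j k * X j * 1) = (\<Sum>j<N. \<pi>1 j * X j * (\<Sum>k<N. P2 j k))"
    by (simp add: sum_distrib_left ac_simps)
  also have "\<dots> = (\<Sum>j<N. \<pi>1 j * X j * 1)" by (intro sum.cong refl) (simp add: two_step_row_sum)
  finally show ?thesis unfolding selection_form_def by simp
qed

lemma selection_form_cong: "(\<And>k. k < N \<Longrightarrow> f k = g k) \<Longrightarrow> selection_form X f = selection_form X g"
  unfolding selection_form_def by (intro arg_cong2[where f="(-)"] sum.cong refl) auto

lemma drift_rate_neutral: "real N * drift_rate 0 t = selection_form (\<lambda>j. ind (j \<in> fst t)) (u t)"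
proof -
  have "w1 i j * (u t j * strength N w1 i - weighted_payoff t i) / (strength N w1 i * (\<Sum>k<N. w1 i k * F 0 t k)) =
      p1 i j * (u t j - (\<Sum>k<N. p1 i k * u t k))" if "i < N" for i j
    using L1.strength_pos[OF that]
    by (simp add: fecundity_neutral strength_def[symmetric] weighted_payoff_def trans_prob_def
        sum_divide_distrib[symmetric] field_simps)
  then have "real N * drift_rate 0 t =
      (\<Sum>i<N. \<pi>1 i * (\<Sum>j<N. ind (j \<in> fst t) * (p1 i j * (u t j - (\<Sum>k<N. p1 i k * u t k)))))"
    unfolding drift_rate_def using N_pos by (simp add: sum_distrib_left)
  then show ?thesis by (simp only: selection_form_eq)
qed

lemma payoff_eq:
  assumes "k < N"
  shows "payoff N w1 b c r X1 X2 k =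
    - c * ind (k \<in> X1) + b * (\<Sum>l<N. p1 l k * ind (l \<in> X1)) + (r - 1) * ind (k \<in> X2) + 1"
proof -
  have "(\<Sum>l<N. b * (w1 k l / strength N w1 l) * ind (l \<in> X1)) = b * (\<Sum>l<N. p1 l k * ind (l \<in> X1))"
    unfolding sum_distrib_left
    by (intro sum.cong refl) (simp add: trans_prob_def L1.weight_sym[OF assms])
  then show ?thesis unfolding payoff_def by simp
qed

lemma selection_form_coop_coop:
  "selection_form (\<lambda>j. ind (j \<in> fst t)) (\<lambda>j. ind (j \<in> fst t)) =
    - (\<Sum>j<N. \<Sum>k<N. \<pi>1 j * P2 j k * (coop_pair j k t - coop_freq t))"
proof -
  have "(\<Sum>j<N. \<Sum>k<N. \<pi>1 j * P2 j k * (coop_pair j k t - coop_freq t)) =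
      (\<Sum>j<N. \<Sum>k<N. \<pi>1 j * P2 j k * ind (j \<in> fst t) * ind (k \<in> fst t))
      - (\<Sum>j<N. \<Sum>k<N. \<pi>1 j * P2 j k) * coop_freq t"
    unfolding coop_pair_def by (simp add: right_diff_distrib sum_subtractf sum_distrib_right mult.assoc)
  moreover have "(\<Sum>j<N. \<pi>1 j * ind (j \<in> fst t) * ind (j \<in> fst t)) = coop_freq t"
    by (simp add: coop_freq_def avg_state_def mult.assoc)
  ultimately show ?thesis unfolding selection_form_def two_step_total by simp
qed

lemma selection_form_coop_neighbours:
  "selection_form (\<lambda>j. ind (j \<in> fst t)) (\<lambda>j. \<Sum>l<N. p1 l j * ind (l \<in> fst t)) =
    (\<Sum>j<N. \<Sum>l<N. \<pi>1 j * p1 l j * (coop_pair j l t - coop_freq t))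
    - (\<Sum>j<N. \<Sum>k<N. \<Sum>l<N. \<pi>1 j * P2 j k * p1 l k * (coop_pair j l t - coop_freq t))"
proof -
  let ?x = "\<lambda>j. ind (j \<in> fst t)"
  let ?c = "\<Sum>j<N. \<Sum>l<N. \<pi>1 j * p1 l j"
  have "(\<Sum>j<N. \<Sum>k<N. \<Sum>l<N. \<pi>1 j * P2 j k * p1 l k) = (\<Sum>k<N. \<Sum>j<N. \<Sum>l<N. \<pi>1 j * P2 j k * p1 l k)"
    by (rule sum.swap)
  also have "\<dots> = (\<Sum>k<N. \<pi>1 k * (\<Sum>l<N. p1 l k))"
    by (intro sum.cong refl) (simp add: sum_product[symmetric] two_step_stationary)
  finally have weights: "(\<Sum>j<N. \<Sum>k<N. \<Sum>l<N. \<pi>1 j * P2 j k * p1 l k) = ?c"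
    by (simp add: sum_distrib_left)
  have neighbours: "(\<Sum>j<N. \<Sum>l<N. \<pi>1 j * p1 l j * (coop_pair j l t - coop_freq t)) =
      (\<Sum>j<N. \<pi>1 j * ?x j * (\<Sum>l<N. p1 l j * ?x l)) - ?c * coop_freq t"
    unfolding coop_pair_def by (simp add: right_diff_distrib sum_subtractf sum_distrib_left sum_distrib_right ac_simps)
  have "(\<Sum>j<N. \<Sum>k<N. \<Sum>l<N. \<pi>1 j * P2 j k * p1 l k * (coop_pair j l t - coop_freq t)) =
      (\<Sum>j<N. \<Sum>k<N. \<pi>1 j * P2 j k * ?x j * (\<Sum>l<N. p1 l k * ?x l))
      - (\<Sum>j<N. \<Sum>k<N. \<Sum>l<N. \<pi>1 j * P2 j k * p1 l k) * coop_freq t"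
    unfolding coop_pair_def by (simp add: right_diff_distrib sum_subtractf sum_distrib_left sum_distrib_right ac_simps)
  then show ?thesis unfolding selection_form_def neighbours weights by simp
qed

lemma selection_form_coop_mut:
  "selection_form (\<lambda>j. ind (j \<in> fst t)) (\<lambda>j. ind (j \<in> snd t)) =
    (\<Sum>j<N. \<pi>1 j * (cross_pair j j t - coop_freq t * mut_freq t))
    - (\<Sum>j<N. \<Sum>k<N. \<pi>1 j * P2 j k * (cross_pair j k t - coop_freq t * mut_freq t))"
proof -
  have "(\<Sum>j<N. \<pi>1 j * (cross_pair j j t - coop_freq t * mut_freq t)) =
      (\<Sum>j<N. \<pi>1 j * ind (j \<in> fst t) * ind (j \<in> snd t)) - (\<Sum>j<N. \<pi>1 j) * (coop_freq t * mut_freq t)"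
    unfolding cross_pair_def by (simp add: right_diff_distrib sum_subtractf sum_distrib_right mult.assoc)
  moreover have "(\<Sum>j<N. \<Sum>k<N. \<pi>1 j * P2 j k * (cross_pair j k t - coop_freq t * mut_freq t)) =
      (\<Sum>j<N. \<Sum>k<N. \<pi>1 j * P2 j k * ind (j \<in> fst t) * ind (k \<in> snd t))
      - (\<Sum>j<N. \<Sum>k<N. \<pi>1 j * P2 j k) * (coop_freq t * mut_freq t)"
    unfolding cross_pair_def by (simp add: right_diff_distrib sum_subtractf sum_distrib_right mult.assoc)
  ultimately show ?thesis
    unfolding selection_form_def two_step_total L1.stat_dist_sum by simp
qed

lemma drift_rate_neutral_pairs:
  "real N * drift_rate 0 t =
    c * (\<Sum>j<N. \<Sum>k<N. \<pi>1 j * P2 j k * (coop_pair j k t - coop_freq t))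
    + b * ((\<Sum>j<N. \<Sum>l<N. \<pi>1 j * p1 l j * (coop_pair j l t - coop_freq t))
         - (\<Sum>j<N. \<Sum>k<N. \<Sum>l<N. \<pi>1 j * P2 j k * p1 l k * (coop_pair j l t - coop_freq t)))
    + (r - 1) * ((\<Sum>j<N. \<pi>1 j * (cross_pair j j t - coop_freq t * mut_freq t))
         - (\<Sum>j<N. \<Sum>k<N. \<pi>1 j * P2 j k * (cross_pair j k t - coop_freq t * mut_freq t)))"
proof -
  let ?x = "\<lambda>j. ind (j \<in> fst t)"
  have "real N * drift_rate 0 t = selection_form ?x (\<lambda>k. - c * ?x k
      + b * (\<Sum>l<N. p1 l k * ?x l) + (r - 1) * ind (k \<in> snd t) + 1)"
    unfolding drift_rate_neutral by (rule selection_form_cong) (simp add: payoff_eq)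
  also have "\<dots> = - c * selection_form ?x ?x + b * selection_form ?x (\<lambda>k. \<Sum>l<N. p1 l k * ?x l)
      + (r - 1) * selection_form ?x (\<lambda>k. ind (k \<in> snd t))"
    by (simp only: selection_form_add selection_form_cmult selection_form_const_1)
  finally show ?thesis
    unfolding selection_form_coop_coop selection_form_coop_neighbours selection_form_coop_mut by simp
qed

lemma drift_series_neutral_sums:
  assumes \<xi>: "\<xi> \<in> states N"
  shows "(\<lambda>n. real N * drift_series \<xi> 0 n) sums
    (c * (\<Sum>j<N. \<Sum>k<N. \<pi>1 j * P2 j k * coop_pair_total \<xi> j k)
     + b * ((\<Sum>j<N. \<Sum>l<N. \<pi>1 j * p1 l j * coop_pair_total \<xi> j l)
          - (\<Sum>j<N. \<Sum>k<N. \<Sum>l<N. \<pi>1 j * P2 j k * p1 l k * coop_pair_total \<xi> j l))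
     + (r - 1) * ((\<Sum>j<N. \<pi>1 j * cross_pair_total \<xi> j j)
          - (\<Sum>j<N. \<Sum>k<N. \<pi>1 j * P2 j k * cross_pair_total \<xi> j k)))"
proof -
  have "real N * drift_series \<xi> 0 n =
    c * (\<Sum>j<N. \<Sum>k<N. \<pi>1 j * P2 j k * coop_pair_dev \<xi> j k n)
    + b * ((\<Sum>j<N. \<Sum>l<N. \<pi>1 j * p1 l j * coop_pair_dev \<xi> j l n)
         - (\<Sum>j<N. \<Sum>k<N. \<Sum>l<N. \<pi>1 j * P2 j k * p1 l k * coop_pair_dev \<xi> j l n))
    + (r - 1) * ((\<Sum>j<N. \<pi>1 j * cross_pair_dev \<xi> j j n)
         - (\<Sum>j<N. \<Sum>k<N. \<pi>1 j * P2 j k * cross_pair_dev \<xi> j k n))" for n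
  proof -
    have "real N * drift_series \<xi> 0 n = neutral_exp \<xi> n (\<lambda>t. real N * drift_rate 0 t)"
      unfolding drift_series_def neutral_exp_def by (simp add: sum_distrib_left ac_simps)
    then show ?thesis
      unfolding drift_rate_neutral_pairs neutral_exp_linear coop_pair_dev_def cross_pair_dev_def .
  qed
  then show ?thesis
    by (simp only:) (intro sums_add sums_diff sums_mult sums_sum pair_dev_sums[OF \<xi>]; simp)
qed

lemma beta_gamma_combination_eq:
  assumes \<xi>: "\<xi> \<in> states N"
    and \<beta>: "beta_system N w1 (fst \<xi>) \<beta>" and \<gamma>: "gamma_system N w1 w2 (fst \<xi>) (snd \<xi>) \<gamma>"
  shows "b * ((\<Sum>i<N. \<Sum>l<N. \<pi>1 i * p1 l i * \<beta> i l)
             - (\<Sum>i<N. \<Sum>j<N. \<Sum>l<N. \<pi>1 i * P2 i j * p1 l j * \<beta> i l))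
        + c * theta N w1 \<beta> 2 - (r - 1) * phi N w1 w2 \<gamma> 2 0 = real N * suminf (drift_series \<xi> 0)"
proof -
  define \<kappa> where "\<kappa> = (\<Sum>a<N. \<pi>1 a * cross_pair_total \<xi> a a)"
  have \<beta>_eq: "\<beta> i j = coop_pair_total \<xi> i j" if "i < N" "j < N" for i j
    using L1.beta_system_unique[OF \<beta> coop_pair_total_beta_system[OF \<xi>] that] .
  have \<gamma>_eq: "\<gamma> i j = cross_pair_total \<xi> i j - \<kappa>" if "i < N" "j < N" for i j
    using gamma_system_unique[OF \<gamma> cross_pair_total_gamma_system[OF \<xi>] that] by (simp add: \<kappa>_def)
  have "phi N w1 w2 \<gamma> 2 0 = (\<Sum>i<N. \<Sum>j<N. \<pi>1 i * P2 i j * (cross_pair_total \<xi> i j - \<kappa>))"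
    unfolding phi_def using \<gamma>_eq
    by (intro sum.cong refl) (simp add: if_distrib[where f="\<lambda>x. _ * x"] sum.delta' cong: if_cong)
  also have "\<dots> = (\<Sum>i<N. \<Sum>j<N. \<pi>1 i * P2 i j * cross_pair_total \<xi> i j) - \<kappa>"
    using two_step_total by (simp add: right_diff_distrib sum_subtractf sum_distrib_right[symmetric])
  finally have phi_eq: "phi N w1 w2 \<gamma> 2 0 = (\<Sum>i<N. \<Sum>j<N. \<pi>1 i * P2 i j * cross_pair_total \<xi> i j) - \<kappa>" .
  have theta_eq: "theta N w1 \<beta> 2 = (\<Sum>j<N. \<Sum>k<N. \<pi>1 j * P2 j k * coop_pair_total \<xi> j k)"
    unfolding theta_def by (intro sum.cong refl) (simp add: \<beta>_eq)
  have benefit_eq: "(\<Sum>i<N. \<Sum>l<N. \<pi>1 i * p1 l i * \<beta> i l) = (\<Sum>j<N. \<Sum>l<N. \<pi>1 j * p1 l j * coop_pair_total \<xi> j l)"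
    "(\<Sum>i<N. \<Sum>j<N. \<Sum>l<N. \<pi>1 i * P2 i j * p1 l j * \<beta> i l) =
      (\<Sum>j<N. \<Sum>k<N. \<Sum>l<N. \<pi>1 j * P2 j k * p1 l k * coop_pair_total \<xi> j l)"
    by (intro sum.cong refl; simp add: \<beta>_eq)+
  have "(\<Sum>n. real N * drift_series \<xi> 0 n) = real N * suminf (drift_series \<xi> 0)"
    using drift_series_summable[OF \<xi>] delta_max_pos by (intro suminf_mult) auto
  then show ?thesis
    using sums_unique[OF drift_series_neutral_sums[OF \<xi>]]
    unfolding phi_eq theta_eq benefit_eq \<kappa>_def by (simp add: algebra_simps)
qed

lemma fix_prob1_derivative_formula:
  assumes "\<xi>1 \<subseteq> {0..<N}" "\<xi>2 \<subseteq> {0..<N}"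
    and "beta_system N w1 \<xi>1 \<beta>" and "gamma_system N w1 w2 \<xi>1 \<xi>2 \<gamma>"
  shows "\<exists>D. ((\<lambda>\<delta>. fix_prob1 N w1 w2 b c r \<delta> (\<xi>1, \<xi>2)) has_real_derivative D) (at 0 within {0..})
    \<and> (D > 0 \<longleftrightarrow>
        b * ((\<Sum>i<N. \<Sum>l<N. \<pi>1 i * p1 l i * \<beta> i l)
             - (\<Sum>i<N. \<Sum>j<N. \<Sum>l<N. \<pi>1 i * P2 i j * p1 l j * \<beta> i l))
        + c * theta N w1 \<beta> 2 - (r - 1) * phi N w1 w2 \<gamma> 2 0 > 0)"
proof -
  have \<xi>: "(\<xi>1, \<xi>2) \<in> states N" using assms(1,2) by (simp add: states_def)
  have "0 < suminf (drift_series (\<xi>1, \<xi>2) 0) \<longleftrightarrow> 0 < real N * suminf (drift_series (\<xi>1, \<xi>2) 0)"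
    using N_pos by (simp add: zero_less_mult_iff)
  then show ?thesis
    using fix_prob1_has_derivative[OF \<xi>] beta_gamma_combination_eq[OF \<xi>] assms(3,4) by auto
qed

end

theorem mainTheorem3:
  fixes N :: nat and w1 w2 \<beta> \<gamma> :: "nat \<Rightarrow> nat \<Rightarrow> real" and b c r :: real
    and \<xi>1 \<xi>2 :: "nat set"
  assumes "N \<ge> 2"
    and "weighted_graph N w1" and "weighted_graph N w2"
    and "r \<ge> 0"
    and "\<xi>1 \<subseteq> {0..<N}" and "\<xi>2 \<subseteq> {0..<N}"
    and "\<not> ((\<xi>1 = {} \<or> \<xi>1 = {0..<N}) \<and> (\<xi>2 = {} \<or> \<xi>2 = {0..<N}))"
    and "beta_system N w1 \<xi>1 \<beta>"
    and "gamma_system N w1 w2 \<xi>1 \<xi>2 \<gamma>"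
  shows "\<exists>D. ((\<lambda>\<delta>. fix_prob1 N w1 w2 b c r \<delta> (\<xi>1, \<xi>2)) has_real_derivative D)
               (at 0 within {0..})
           \<and> (D > 0 \<longleftrightarrow>
               b * ((\<Sum>i<N. \<Sum>l<N. stat_dist N w1 i * trans_prob N w1 l i * \<beta> i l)
                    - (\<Sum>i<N. \<Sum>j<N. \<Sum>l<N. stat_dist N w1 i * mat_pow N (trans_prob N w1) 2 i j
                                           * trans_prob N w1 l j * \<beta> i l))
               + c * theta N w1 \<beta> 2 - (r - 1) * phi N w1 w2 \<gamma> 2 0 > 0)"
proof -
  \<comment> \<open>The equivalence holds for every initial state and every r.\<close>
  interpret two_layer N w1 w2 b c r
    using assms(1-3) by unfold_locales
  show ?thesis
    using fix_prob1_derivative_formula[OF assms(5,6,8,9)] .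
qed

end
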